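(* Let $\diamond\in\{\square,\text{horizontal domino}\}$, $L\ge 0$, $\lambda$ a partition. For all sufficiently large $n$ (with $N=2n$) and every $b\in\mathcal M_\diamond(L,\lambda)$, with $T,Q,P$ the DDF data of $b$ and $\check d\otimes c$ the VXR data of $b$: (1) for each $i\in\{1,\dots,L\}$, $i$ lies in row $c_i$ of $P$; (2) for $j\notin A$, $j$ lies in row $r$ of $T$ if and only if $\check d_j=(N+1-r)^\vee$; (3) for $i\in A$, $L+1-i$ lies in row $r$ of $Q$ if and only if $\check d_i=r^\vee$, where $A=\{i:\check d_i\in\{1^\vee,\dots,n^\vee\}\}$. (Since rows of tableaux are increasing, this determines $P,T,Q$ completely from $\check d\otimes c$.)
   Context: $\mathcal M_\diamond(L,\lambda)$: words $b=b_L\cdots b_1$ in letters $r,\bar r$ ($r\ge1$) and, only for $\diamond=\square$, $\emptyset$, such that with $\lambda^{(0)}=\emptyset$ and $\lambda^{(i)}$ obtained from $\lambda^{(i-1)}$ by adding a cell to row $r$ if $b_i=r$, removing one from row $r$ if $b_i=\bar r$, no change if $b_i=\emptyset$, all $\lambda^{(i)}$ are partitions and $\lambda^{(L)}=\lambda$. DDF data: start with $T_0,I_0$ empty; for $i=1..L$: if $b_i=r$ append $i$ to the end of row $r$; if $b_i=\bar r$ reverse-row-insert from the last cell of row $r$, ejecting $a$ from the first row, and add the 2-cycle $(a,i)$ to the involution; if $b_i=\emptyset$ add fixed point $i$. Let $T=T_L$ (shape $\lambda$) and $I=I_L$, an involution on the complement $A'$ of the entries of $T$ in $\{1,\dots,L\}$.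 Starting from $T$, for $a\in A'$ in decreasing order, row-insert $I(a)$ into the current tableau and write $L+1-a$ in the newly created cell of a recording tableau; the final tableau is $P$ and the recording tableau is $Q$ (skew shape $\mathrm{shape}(P)/\lambda$). VXR data: $B^1=\{1,\dots,N\}$, $B^{1\vee}=\{1^\vee,\dots,N^\vee\}$; write $i^*=N+1-i$. Set $\Psi(i)=(i^* )^\vee\otimes i$, $\Psi(\bar i)=i^\vee\otimes i^*$, $\Psi(\emptyset)=1^\vee\otimes1$ and $\Psi(b)=\Psi(b_L)\otimes\cdots\otimes\Psi(b_1)$, a word of length $2L$. Repeatedly replace an adjacent pair $x\otimes y^\vee$ (plain letter immediately left of a dual letter) by $R(x\otimes y^\vee)$, where $R(i\otimes j^\vee)=j^\vee\otimes i$ if $i\ne j$, $(i+1)^\vee\otimes(i+1)$ if $i=j<N$, $1^\vee\otimes1$ if $i=j=N$, until all dual letters precede all plain letters; the result (independent of the order of moves, being the combinatorial $R$-matrix of type $A^{(1)}_{N-1}$) is written $\check d\otimes c$ with $\check d=\check d_L\otimes\cdots\otimes\check d_1$ dual letters and $c=c_L\otimes\cdots\otimes c_1$ plain letters, positions counted from the right. *)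

theory Defs
  imports Main
begin

datatype diamond = Box | HDomino

datatype letter = Add nat | Rem nat | Emp

text \<open>A word b = b_L ... b_1 is stored as the list [b_1, ..., b_L], i.e. b_i = bs ! (i - 1).\<close>

text \<open>Shapes are functions from rows (numbered from 1) to row lengths; row 0 is always 0.\<close>

definition is_partition :: "(nat \<Rightarrow> nat) \<Rightarrow> bool" where
  "is_partition f \<longleftrightarrow> f 0 = 0 \<and> (\<forall>r\<ge>1. f (Suc r) \<le> f r) \<and> finite {r. f r \<noteq> 0}"

fun shape_step :: "(nat \<Rightarrow> nat) \<Rightarrow> letter \<Rightarrow> (nat \<Rightarrow> nat)" where
  "shape_step f (Add r) = f(r := f r + 1)"
| "shape_step f (Rem r) = f(r := f r - 1)"
| "shape_step f Emp = f"

definition shape :: "letter list \<Rightarrow> (nat \<Rightarrow> nat)" where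
  "shape bs = foldl shape_step (\<lambda>_. 0) bs"

fun letter_ok :: "diamond \<Rightarrow> letter \<Rightarrow> bool" where
  "letter_ok dm (Add r) = (r \<ge> 1)"
| "letter_ok dm (Rem r) = (r \<ge> 1)"
| "letter_ok dm Emp = (dm = Box)"

text \<open>Removal steps must remove an existing cell (row length may not go below 0).\<close>
fun removal_ok :: "(nat \<Rightarrow> nat) \<Rightarrow> letter \<Rightarrow> bool" where
  "removal_ok f (Rem r) = (f r > 0)"
| "removal_ok f _ = True"

definition Mset :: "diamond \<Rightarrow> nat \<Rightarrow> (nat \<Rightarrow> nat) \<Rightarrow> letter list set" where
  "Mset dm L lam = {bs. length bs = L \<and> (\<forall>x\<in>set bs. letter_ok dm x)
      \<and> (\<forall>k<L. removal_ok (shape (take k bs)) (bs ! k))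
      \<and> (\<forall>k\<le>L. is_partition (shape (take k bs)))
      \<and> shape bs = lam}"

section \<open>Tableaux as lists of rows (row r is entry r - 1)\<close>

type_synonym tableau = "nat list list"

definition row :: "tableau \<Rightarrow> nat \<Rightarrow> nat list" where
  "row T r = (if 1 \<le> r \<and> r \<le> length T then T ! (r - 1) else [])"

definition add_to_row :: "tableau \<Rightarrow> nat \<Rightarrow> nat \<Rightarrow> tableau" where
  "add_to_row T r x =
     (if r - 1 < length T then T[r - 1 := T ! (r - 1) @ [x]]
      else T @ replicate (r - 1 - length T) [] @ [[x]])"

text \<open>Row insertion (RSK bumping); returns the new tableau and the (1-based) row of the new cell.\<close>
fun row_ins :: "nat \<Rightarrow> tableau \<Rightarrow> tableau \<times> nat" where
  "row_ins x [] = ([[x]], 1)"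
| "row_ins x (rw # rws) =
     (if (\<forall>y\<in>set rw. y < x) then ((rw @ [x]) # rws, 1)
      else (let j = length (takeWhile (\<lambda>y. y < x) rw); z = rw ! j;
                (rws', k) = row_ins z rws
            in ((rw[j := x]) # rws', Suc k)))"

text \<open>Reverse bumping: the value x moves up into (0-based) rows k-1, ..., 0, replacing
  in each row the largest entry smaller than it; the entry leaving row 0 is ejected.\<close>
fun rev_bump :: "tableau \<Rightarrow> nat \<Rightarrow> nat \<Rightarrow> tableau \<times> nat" where
  "rev_bump T 0 x = (T, x)"
| "rev_bump T (Suc k) x =
     (let rw = T ! k; j = length (takeWhile (\<lambda>y. y < x) rw) - 1
      in rev_bump (T[k := rw[j := x]]) k (rw ! j))"

text \<open>Reverse row insertion from the last cell of (1-based) row r.\<close>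
definition rev_ins_from :: "tableau \<Rightarrow> nat \<Rightarrow> tableau \<times> nat" where
  "rev_ins_from T r =
     (let x = last (T ! (r - 1)); T' = T[r - 1 := butlast (T ! (r - 1))]
      in rev_bump T' (r - 1) x)"

fun ddf_step :: "tableau \<times> (nat \<Rightarrow> nat) \<Rightarrow> nat \<times> letter \<Rightarrow> tableau \<times> (nat \<Rightarrow> nat)" where
  "ddf_step (T, I) (i, Add r) = (add_to_row T r i, I)"
| "ddf_step (T, I) (i, Rem r) = (let (T', a) = rev_ins_from T r in (T', I(a := i, i := a)))"
| "ddf_step (T, I) (i, Emp) = (T, I(i := i))"

definition ddf_TI :: "letter list \<Rightarrow> tableau \<times> (nat \<Rightarrow> nat)" where
  "ddf_TI bs = foldl ddf_step ([], id) (zip [1..<Suc (length bs)] bs)"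

definition ddf_T :: "letter list \<Rightarrow> tableau" where
  "ddf_T bs = fst (ddf_TI bs)"

definition ddf_I :: "letter list \<Rightarrow> nat \<Rightarrow> nat" where
  "ddf_I bs = snd (ddf_TI bs)"

definition entries :: "tableau \<Rightarrow> nat set" where
  "entries T = (\<Union>rw\<in>set T. set rw)"

definition ddf_Aprime :: "letter list \<Rightarrow> nat set" where
  "ddf_Aprime bs = {1..length bs} - entries (ddf_T bs)"

text \<open>For a in A' in decreasing order, insert I(a) into P and record L+1-a in Q
  (Q stored by rows: row r of Q lists its entries, in the order the cells were created).\<close>
definition ddf_PQ :: "letter list \<Rightarrow> tableau \<times> tableau" where
  "ddf_PQ bs =
     foldl (\<lambda>(P, Q) a. let (P', k) = row_ins (ddf_I bs a) P
                       in (P', add_to_row Q k (length bs + 1 - a)))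
           (ddf_T bs, [])
           (rev (sorted_list_of_set (ddf_Aprime bs)))"

definition ddf_P :: "letter list \<Rightarrow> tableau" where
  "ddf_P bs = fst (ddf_PQ bs)"

definition ddf_Q :: "letter list \<Rightarrow> tableau" where
  "ddf_Q bs = snd (ddf_PQ bs)"

datatype crys = Pl nat | Du nat  \<comment> \<open>Pl i = i in B^1, Du j = j^vee in B^{1 vee}\<close>

fun Psi :: "nat \<Rightarrow> letter \<Rightarrow> crys list" where
  "Psi N (Add i) = [Du (N + 1 - i), Pl i]"
| "Psi N (Rem i) = [Du i, Pl (N + 1 - i)]"
| "Psi N Emp = [Du 1, Pl 1]"

text \<open>Psi(b) = Psi(b_L) (x) ... (x) Psi(b_1), leftmost tensor factor first in the list.\<close>
definition Psi_word :: "nat \<Rightarrow> letter list \<Rightarrow> crys list" where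
  "Psi_word N bs = concat (map (Psi N) (rev bs))"

definition Rmat :: "nat \<Rightarrow> nat \<Rightarrow> nat \<Rightarrow> crys list" where
  "Rmat N i j = (if i \<noteq> j then [Du j, Pl i]
                 else if i < N then [Du (i + 1), Pl (i + 1)]
                 else [Du 1, Pl 1])"

inductive rstep :: "nat \<Rightarrow> crys list \<Rightarrow> crys list \<Rightarrow> bool" for N where
  "rstep N (u @ [Pl i, Du j] @ v) (u @ Rmat N i j @ v)"

end

theory Submission
  imports Defs "HOL-Library.Confluence"
begin

text \<open>After
  \<open>k\<close> letters let \<open>(T, I)\<close> be the partial DDF data and run the DDF insertion for
  \<open>j = k, \<dots>, 1\<close> starting from \<open>T\<close>: for \<open>j \<notin> T\<close> row-insert \<open>I j\<close> and record the row of the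
  new cell, for \<open>j \<in> T\<close> record the label \<open>N + 1 - row\<close> of \<open>j\<close> in \<open>T\<close>. The invariant is that
  the dual letters of the VXR data are exactly this record and that \<open>c\<^sub>j\<close> is the row of \<open>j\<close> in
  the final tableau of the run.

  A new letter contributes a pair \<open>d\<^sup>\<or> \<otimes> p\<close> on the left, and the R-matrix carries the plain
  letter \<open>p\<close> to the right through the old dual letters. Adding a cell to row \<open>r\<close> puts the
  maximal entry \<open>k + 1\<close> at the end of row \<open>r\<close>; during the run it moves one row down exactly
  when an insertion ends in its row, which is what \<open>R(p \<otimes> p\<^sup>\<or>) = (p + 1)\<^sup>\<or> \<otimes> (p + 1)\<close> does
  to the carried letter. Removing a cell reverse bumps along a path whose labels are exactly
  the ones the carried letter \<open>N + 1 - r\<close> meets, each raising it to the label of the next row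
  up, until the ejected entry \<open>a\<close> in row 1 turns \<open>N\<close> into \<open>1\<close>; from there on \<open>k + 1\<close>, now
  paired with \<open>a\<close>, is again a new maximal entry. As \<open>N\<close> is large, recorded rows (at most
  \<open>2k\<close>) never meet labels \<open>N + 1 - row\<close>, so the small dual letters single out \<open>A\<close>.\<close>

section \<open>The combinatorial R-matrix on words\<close>

definition R_plain :: "nat \<Rightarrow> nat \<Rightarrow> nat \<Rightarrow> nat" where
  "R_plain N i j = (if i \<noteq> j then i else if i < N then i + 1 else 1)"

definition R_dual :: "nat \<Rightarrow> nat \<Rightarrow> nat \<Rightarrow> nat" where
  "R_dual N i j = (if i \<noteq> j then j else R_plain N i j)"

lemma Rmat_eq: "Rmat N i j = [Du (R_dual N i j), Pl (R_plain N i j)]"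
  by (simp add: Rmat_def R_dual_def R_plain_def)

lemma rstep_append: "rstep N x y \<Longrightarrow> rstep N (u @ x @ v) (u @ y @ v)"
proof (induction rule: rstep.induct)
  case (1 u' i j v')
  show ?case using rstep.intros[of N "u @ u'" i j "v' @ v"] by simp
qed

lemma rsteps_append: "(rstep N)\<^sup>*\<^sup>* x y \<Longrightarrow> (rstep N)\<^sup>*\<^sup>* (u @ x @ v) (u @ y @ v)"
  by (induction rule: rtranclp_induct) (auto intro: rtranclp.rtrancl_into_rtrancl rstep_append)

lemma rstep_iff:
  "rstep N a b \<longleftrightarrow> (\<exists>t i j. Suc t < length a \<and> a ! t = Pl i \<and> a ! Suc t = Du j \<and>
     b = a[t := Du (R_dual N i j), Suc t := Pl (R_plain N i j)])"
proof
  assume "rstep N a b"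
  then show "\<exists>t i j. Suc t < length a \<and> a ! t = Pl i \<and> a ! Suc t = Du j \<and>
     b = a[t := Du (R_dual N i j), Suc t := Pl (R_plain N i j)]"
  proof cases
    case (1 u i j v)
    then show ?thesis
      by (intro exI[of _ "length u"] exI[of _ i] exI[of _ j])
        (simp add: Rmat_eq list_update_append nth_append)
  qed
next
  assume "\<exists>t i j. Suc t < length a \<and> a ! t = Pl i \<and> a ! Suc t = Du j \<and>
     b = a[t := Du (R_dual N i j), Suc t := Pl (R_plain N i j)]"
  then obtain t i j where t: "Suc t < length a" "a ! t = Pl i" "a ! Suc t = Du j"
    and b: "b = a[t := Du (R_dual N i j), Suc t := Pl (R_plain N i j)]" by blast
  have "a = take t a @ [Pl i, Du j] @ drop (Suc (Suc t)) a"
    using t by (metis Cons_nth_drop_Suc Suc_lessD append_Cons append_self_conv2 id_take_nth_drop)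
  moreover have "b = take t a @ Rmat N i j @ drop (Suc (Suc t)) a"
    using t b by (simp add: Rmat_eq upd_conv_take_nth_drop list_update_append Cons_nth_drop_Suc)
  ultimately show "rstep N a b" by (metis rstep.intros)
qed

text \<open>Two distinct moves act on disjoint pairs of positions, so they commute.\<close>

lemma rstep_strong_confluent: "strong_confluentp (rstep N)"
proof
  fix a b c assume "rstep N a b" "rstep N a c"
  then obtain t i j t' i' j' where
    h: "Suc t < length a" "a ! t = Pl i" "a ! Suc t = Du j"
      "b = a[t := Du (R_dual N i j), Suc t := Pl (R_plain N i j)]" and
    h': "Suc t' < length a" "a ! t' = Pl i'" "a ! Suc t' = Du j'"
      "c = a[t' := Du (R_dual N i' j'), Suc t' := Pl (R_plain N i' j')]"
    unfolding rstep_iff by blast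
  show "\<exists>e. (rstep N)\<^sup>*\<^sup>* b e \<and> (rstep N)\<^sup>=\<^sup>= c e"
  proof (cases "t = t'")
    case True
    then show ?thesis using h h' by (intro exI[of _ b]) simp
  next
    case False
    have disj: "t' \<noteq> Suc t" "t \<noteq> Suc t'" using h h' by auto
    define e where "e = b[t' := Du (R_dual N i' j'), Suc t' := Pl (R_plain N i' j')]"
    have "rstep N b e" unfolding rstep_iff e_def
      using h h' False disj by (intro exI[of _ t'] exI[of _ i'] exI[of _ j']) simp
    moreover have "rstep N c e" unfolding rstep_iff e_def
      using h h' False disj by (intro exI[of _ t] exI[of _ i] exI[of _ j]) (simp add: list_update_swap)
    ultimately show ?thesis by blast
  qed
qed

definition r_normal :: "nat \<Rightarrow> crys list \<Rightarrow> bool" where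
  "r_normal N w \<longleftrightarrow> (\<nexists>w'. rstep N w w')"

lemma r_normal_unique:
  assumes "(rstep N)\<^sup>*\<^sup>* w u" "r_normal N u" "(rstep N)\<^sup>*\<^sup>* w v" "r_normal N v"
  shows "u = v"
proof -
  obtain z where "(rstep N)\<^sup>*\<^sup>* u z" "(rstep N)\<^sup>*\<^sup>* v z"
    using confluentpD[OF strong_confluentp_imp_confluentp[OF rstep_strong_confluent]] assms(1,3)
    by blast
  with assms(2,4) show ?thesis
    by (metis converse_rtranclpE r_normal_def)
qed

lemma r_normal_duals_plains: "r_normal N (map Du d @ map Pl c)"
proof -
  have "map Du d @ map Pl c \<noteq> u @ [Pl i, Du j] @ v" for u i j v
  proof (induction d arbitrary: u)
    case Nil
    then show ?case by (auto simp: map_eq_append_conv)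
  next
    case (Cons a d)
    then show ?case by (cases u) auto
  qed
  then show ?thesis unfolding r_normal_def by (metis rstep.simps)
qed

lemma duals_plains_inject:
  "map Du d @ map Pl c = map Du d' @ map Pl c' \<Longrightarrow> d = d' \<and> c = c'"
proof (induction d arbitrary: d')
  case Nil
  then show ?case by (cases d') (auto simp: Cons_eq_map_conv inj_map_eq_map inj_def)
next
  case (Cons a d)
  then show ?case by (cases d') (auto simp: map_eq_Cons_conv)
qed

section \<open>The VXR data as an explicit recursion\<close>

fun R_carry :: "nat \<Rightarrow> nat \<Rightarrow> nat list \<Rightarrow> nat list \<times> nat" where
  "R_carry N p [] = ([], p)"
| "R_carry N p (j # ds) =
     (let q = R_plain N p j in (R_dual N p j # fst (R_carry N q ds), snd (R_carry N q ds)))"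

lemma R_carry_rsteps:
  "(rstep N)\<^sup>*\<^sup>* (Pl p # map Du ds) (map Du (fst (R_carry N p ds)) @ [Pl (snd (R_carry N p ds))])"
proof (induction ds arbitrary: p)
  case Nil
  then show ?case by simp
next
  case (Cons j ds)
  define q where "q = R_plain N p j"
  have "rstep N ([] @ [Pl p, Du j] @ map Du ds) ([Du (R_dual N p j)] @ (Pl q # map Du ds) @ [])"
    using rstep.intros[of N "[]" p j "map Du ds"] by (simp add: Rmat_eq q_def)
  moreover have "(rstep N)\<^sup>*\<^sup>* ([Du (R_dual N p j)] @ (Pl q # map Du ds) @ [])
     ([Du (R_dual N p j)] @ (map Du (fst (R_carry N q ds)) @ [Pl (snd (R_carry N q ds))]) @ [])"
    by (rule rsteps_append[OF Cons.IH])
  ultimately show ?case by (simp add: q_def Let_def converse_rtranclp_into_rtranclp)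
qed

definition Psi_dual :: "nat \<Rightarrow> letter \<Rightarrow> nat" where
  "Psi_dual N b = (case b of Add i \<Rightarrow> N + 1 - i | Rem i \<Rightarrow> i | Emp \<Rightarrow> 1)"

definition Psi_plain :: "nat \<Rightarrow> letter \<Rightarrow> nat" where
  "Psi_plain N b = (case b of Add i \<Rightarrow> i | Rem i \<Rightarrow> N + 1 - i | Emp \<Rightarrow> 1)"

lemma Psi_eq: "Psi N b = [Du (Psi_dual N b), Pl (Psi_plain N b)]"
  by (cases b) (auto simp: Psi_dual_def Psi_plain_def)

text \<open>Both components are stored with position \<open>i\<close> of the paper at list index \<open>length bs - i\<close>.\<close>

definition vxr_step :: "nat \<Rightarrow> nat list \<times> nat list \<Rightarrow> letter \<Rightarrow> nat list \<times> nat list" where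
  "vxr_step N dc b =
     (Psi_dual N b # fst (R_carry N (Psi_plain N b) (fst dc)),
      snd (R_carry N (Psi_plain N b) (fst dc)) # snd dc)"

definition vxr :: "nat \<Rightarrow> letter list \<Rightarrow> nat list \<times> nat list" where
  "vxr N bs = foldl (vxr_step N) ([], []) bs"

lemma vxr_snoc: "vxr N (bs @ [b]) = vxr_step N (vxr N bs) b"
  by (simp add: vxr_def)

lemma vxr_rsteps:
  "(rstep N)\<^sup>*\<^sup>* (Psi_word N bs) (map Du (fst (vxr N bs)) @ map Pl (snd (vxr N bs)))"
proof (induction bs rule: rev_induct)
  case Nil
  then show ?case by (simp add: Psi_word_def vxr_def)
next
  case (snoc b bs)
  obtain d c where dc: "vxr N bs = (d, c)" by fastforce
  let ?D = "Du (Psi_dual N b)" and ?p = "Psi_plain N b"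
  have "(rstep N)\<^sup>*\<^sup>* ([?D, Pl ?p] @ Psi_word N bs) ([?D, Pl ?p] @ (map Du d @ map Pl c) @ [])"
    using rsteps_append[OF snoc.IH, of "[?D, Pl ?p]" "[]"] dc by simp
  moreover have "(rstep N)\<^sup>*\<^sup>* ([?D] @ (Pl ?p # map Du d) @ map Pl c)
      ([?D] @ (map Du (fst (R_carry N ?p d)) @ [Pl (snd (R_carry N ?p d))]) @ map Pl c)"
    by (rule rsteps_append[OF R_carry_rsteps])
  ultimately show ?case
    by (simp add: Psi_word_def Psi_eq vxr_snoc dc vxr_step_def)
qed

lemma rsteps_duals_plains_eq_vxr:
  assumes "(rstep N)\<^sup>*\<^sup>* (Psi_word N bs) (map Du d @ map Pl c)"
  shows "d = fst (vxr N bs)" "c = snd (vxr N bs)"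
  using duals_plains_inject[OF r_normal_unique[OF assms r_normal_duals_plains
        vxr_rsteps r_normal_duals_plains]] by auto

lemma length_takeWhile_less: "\<not> (\<forall>y\<in>set xs. P y) \<Longrightarrow> length (takeWhile P xs) < length xs"
  by (induction xs) auto

lemma length_takeWhile_eq:
  "(\<And>i. i < j \<Longrightarrow> P (xs ! i)) \<Longrightarrow> j < length xs \<Longrightarrow> \<not> P (xs ! j) \<Longrightarrow> length (takeWhile P xs) = j"
  using takeWhile_eq_take_P_nth[of j xs P] by simp

lemma sorted_nth_less_iff_takeWhile:
  fixes rw :: "'a::linorder list"
  assumes "sorted_wrt (<) rw" "x \<notin> set rw" "i < length rw"
  shows "rw ! i < x \<longleftrightarrow> i < length (takeWhile (\<lambda>y. y < x) rw)"
proof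
  assume i: "i < length (takeWhile (\<lambda>y. y < x) rw)"
  then have "takeWhile (\<lambda>y. y < x) rw ! i \<in> set (takeWhile (\<lambda>y. y < x) rw)" by (rule nth_mem)
  then show "rw ! i < x" using takeWhile_nth[OF i] set_takeWhileD by fastforce
next
  define t where "t = length (takeWhile (\<lambda>y. y < x) rw)"
  assume "rw ! i < x"
  show "i < t"
  proof (rule ccontr)
    assume "\<not> i < t"
    then have t: "t \<le> i" "t < length rw" using assms(3) by auto
    have "\<not> rw ! t < x" using nth_length_takeWhile t(2) unfolding t_def by blast
    moreover have "rw ! t \<noteq> x" using assms(2) nth_mem t(2) by metis
    ultimately have "x < rw ! t" by (meson linorder_neqE)
    also have "rw ! t \<le> rw ! i"
      using t assms(1,3) sorted_wrt_nth_less[OF assms(1), of t i] by (cases "t = i") auto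
    finally show False using \<open>rw ! i < x\<close> by simp
  qed
qed

lemma set_list_update_split:
  assumes "j < length xs"
  shows "set (xs[j := x]) = set (take j xs) \<union> {x} \<union> set (drop (Suc j) xs)"
    "set xs = set (take j xs) \<union> {xs ! j} \<union> set (drop (Suc j) xs)"
proof -
  show "set (xs[j := x]) = set (take j xs) \<union> {x} \<union> set (drop (Suc j) xs)"
    using assms by (simp add: upd_conv_take_nth_drop)
  have "set xs = set (take j xs @ xs ! j # drop (Suc j) xs)"
    using assms by (subst id_take_nth_drop[of j xs]) simp_all
  then show "set xs = set (take j xs) \<union> {xs ! j} \<union> set (drop (Suc j) xs)"
    by simp
qed

lemma sorted_wrt_list_update:
  fixes rw :: "'a::linorder list"
  assumes "sorted_wrt (<) rw" "j < length rw" "\<forall>i<j. rw ! i < x" "\<forall>i. j < i \<longrightarrow> i < length rw \<longrightarrow> x < rw ! i"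
  shows "sorted_wrt (<) (rw[j := x])"
  unfolding sorted_wrt_iff_nth_less
  using assms sorted_wrt_nth_less[OF assms(1)] by (auto simp: nth_list_update)

lemma sorted_wrt_le_last:
  fixes rw :: "'a::linorder list"
  assumes "sorted_wrt (<) rw" "z \<in> set rw"
  shows "z \<le> last rw"
proof -
  have split: "rw = butlast rw @ [last rw]" using assms(2) by (cases rw rule: rev_cases) auto
  then have "sorted_wrt (<) (butlast rw @ [last rw])" using assms(1) by simp
  then have "\<forall>y\<in>set (butlast rw). y < last rw" by (simp add: sorted_wrt_append)
  moreover have "z \<in> set (butlast rw @ [last rw])" using assms(2) split by simp
  ultimately show ?thesis by auto
qed

lemma rev_upt_split:
  assumes "a \<le> y" "y < x"
  shows "rev [a..<x] = rev [Suc y..<x] @ y # rev [a..<y]"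
proof -
  have "[a..<x] = [a..<y] @ [y..<x]" using assms upt_add_eq_append[of a y "x - y"] by simp
  also have "[y..<x] = y # [Suc y..<x]" using assms by (simp add: upt_conv_Cons)
  finally show ?thesis by simp
qed

lemma rev_upt_Suc: "rev [1..<Suc (Suc k)] = Suc k # rev [1..<Suc k]"
  by simp

lemma nth_rev_upt: "1 \<le> i \<Longrightarrow> i \<le> L \<Longrightarrow> rev [1..<Suc L] ! (L - i) = i"
  by (simp del: upt_Suc add: rev_nth nth_upt)

fun row_of :: "tableau \<Rightarrow> nat \<Rightarrow> nat" where
  "row_of [] j = 0"
| "row_of (rw # rws) j = (if j \<in> set rw then 1 else if row_of rws j = 0 then 0 else Suc (row_of rws j))"

lemma entries_conv: "entries T = set (concat T)"
  by (simp add: entries_def)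

lemma entries_Cons [simp]: "entries (rw # rws) = set rw \<union> entries rws"
  and entries_Nil [simp]: "entries [] = {}"
  and entries_append [simp]: "entries (A @ B) = entries A \<union> entries B"
  by (simp_all add: entries_def)

lemma nth_in_entries: "i < length T \<Longrightarrow> c < length (T ! i) \<Longrightarrow> T ! i ! c \<in> entries T"
  unfolding entries_def by (meson UN_iff nth_mem)

lemma in_entries_nth: "i < length T \<Longrightarrow> x \<in> set (T ! i) \<Longrightarrow> x \<in> entries T"
  unfolding entries_def by (meson UN_iff nth_mem)

lemma entries_list_update_split:
  assumes "i < length T"
  shows "entries (T[i := v]) = entries (take i T) \<union> set v \<union> entries (drop (Suc i) T)"
    "entries T = entries (take i T) \<union> set (T ! i) \<union> entries (drop (Suc i) T)"
proof -
  show "entries (T[i := v]) = entries (take i T) \<union> set v \<union> entries (drop (Suc i) T)"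
    using assms by (simp add: upd_conv_take_nth_drop Un_assoc)
  have "entries T = entries (take i T @ T ! i # drop (Suc i) T)"
    using assms by (subst id_take_nth_drop[of i T]) simp_all
  then show "entries T = entries (take i T) \<union> set (T ! i) \<union> entries (drop (Suc i) T)"
    by (simp add: Un_assoc)
qed

lemma row_of_eq_0_iff: "row_of T j = 0 \<longleftrightarrow> j \<notin> entries T"
  by (induction T) auto

lemma row_of_le_length: "row_of T j \<le> length T"
  by (induction T) auto

lemma row_of_pos: "j \<in> entries T \<Longrightarrow> row_of T j \<ge> 1"
  using row_of_eq_0_iff[of T j] by simp

lemma row_of_bounds: "j \<in> entries T \<Longrightarrow> 1 \<le> row_of T j \<and> row_of T j \<le> length T"
  using row_of_pos row_of_le_length by blast

lemma row_of_eq_Suc_iff: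
  assumes "distinct (concat T)"
  shows "row_of T j = Suc i \<longleftrightarrow> i < length T \<and> j \<in> set (T ! i)"
  using assms
proof (induction T arbitrary: i)
  case Nil
  then show ?case by simp
next
  case (Cons rw rws)
  have d: "distinct (concat rws)" "set rw \<inter> entries rws = {}"
    using Cons.prems by (auto simp: entries_conv)
  show ?case
  proof (cases i)
    case 0
    then show ?thesis using row_of_eq_0_iff[of rws j] by auto
  next
    case (Suc i')
    have "j \<notin> set rw" if "j \<in> set (rws ! i')" "i' < length rws"
    proof -
      have "rws ! i' \<in> set rws" using that(2) by simp
      then have "j \<in> entries rws" using that(1) by (auto simp: entries_def)
      then show ?thesis using d(2) by blast
    qed
    then show ?thesis using Cons.IH[OF d(1), of i'] Suc by auto
  qed
qed

lemma in_row_pos: "j \<in> set (row T r) \<Longrightarrow> 1 \<le> r"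
  by (cases r) (auto simp: row_def)

lemma in_row_iff:
  assumes "distinct (concat T)" "1 \<le> r"
  shows "j \<in> set (row T r) \<longleftrightarrow> j \<in> entries T \<and> row_of T j = r"
proof -
  obtain i where i: "r = Suc i" using assms(2) by (cases r) auto
  show ?thesis
    using row_of_eq_Suc_iff[OF assms(1), of j i] i
    by (auto simp: row_def entries_conv set_concat)
qed

lemma entries_iff_in_row: "j \<in> entries T \<longleftrightarrow> (\<exists>r\<ge>1. j \<in> set (row T r))"
proof
  assume "j \<in> entries T"
  then obtain rw where "rw \<in> set T" "j \<in> set rw" by (auto simp: entries_def)
  then obtain i where "i < length T" "j \<in> set (T ! i)" by (auto simp: in_set_conv_nth)
  then show "\<exists>r\<ge>1. j \<in> set (row T r)" by (intro exI[of _ "Suc i"]) (simp add: row_def)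
next
  assume "\<exists>r\<ge>1. j \<in> set (row T r)"
  then obtain r where "r \<ge> 1" "r \<le> length T" "j \<in> set (T ! (r - 1))"
    by (auto simp: row_def split: if_splits)
  then show "j \<in> entries T" by (auto simp: entries_def)
qed

lemma row_of_eq_if_same_rows:
  assumes "distinct (concat T)" "distinct (concat T')"
    and "\<forall>r\<ge>1. j \<in> set (row T r) \<longleftrightarrow> j \<in> set (row T' r)"
  shows "row_of T' j = row_of T j"
proof (cases "j \<in> entries T")
  case True
  then have "j \<in> set (row T (row_of T j))"
    using in_row_iff[OF assms(1) row_of_pos[OF True]] by simp
  then have "j \<in> set (row T' (row_of T j))" using assms(3) row_of_pos[OF True] by blast
  then show ?thesis using in_row_iff[OF assms(2) row_of_pos[OF True]] by simp
next
  case False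
  then have "j \<notin> entries T'" using assms(3) entries_iff_in_row by blast
  then show ?thesis using False row_of_eq_0_iff by metis
qed

lemma add_to_row_Nil_1 [simp]: "add_to_row [] (Suc 0) x = [[x]]"
  and add_to_row_Cons_1 [simp]: "add_to_row (rw # rws) (Suc 0) x = (rw @ [x]) # rws"
  by (simp_all add: add_to_row_def)

lemma add_to_row_Cons_Suc: "1 \<le> p \<Longrightarrow> add_to_row (rw # rws) (Suc p) x = rw # add_to_row rws p x"
  by (cases p) (auto simp: add_to_row_def)

lemma length_add_to_row: "1 \<le> k \<Longrightarrow> length (add_to_row T k x) = max (length T) k"
  by (auto simp: add_to_row_def)

lemma row_add_to_row:
  assumes "1 \<le> k" "1 \<le> r"
  shows "row (add_to_row T k x) r = (if r = k then row T k @ [x] else row T r)"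
  using assms by (auto simp: add_to_row_def row_def nth_append nth_list_update)

lemma in_row_add_to_row_iff:
  "1 \<le> k \<Longrightarrow> 1 \<le> r \<Longrightarrow> v \<in> set (row (add_to_row Q k w) r) \<longleftrightarrow> v \<in> set (row Q r) \<or> (v = w \<and> r = k)"
  by (auto simp: row_add_to_row)

lemma entries_add_to_row: "1 \<le> k \<Longrightarrow> entries (add_to_row T k x) = insert x (entries T)"
proof (cases "k - 1 < length T")
  case True
  then have "add_to_row T k x = T[k - 1 := T ! (k - 1) @ [x]]" by (simp add: add_to_row_def)
  then show ?thesis using entries_list_update_split[OF True] by auto
next
  case False
  then show ?thesis by (auto simp: add_to_row_def entries_def)
qed

section \<open>Standard tableaux\<close>

definition column_strict :: "nat list \<Rightarrow> nat list \<Rightarrow> bool" where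
  "column_strict u v \<longleftrightarrow> length v \<le> length u \<and> (\<forall>c<length v. u ! c < v ! c)"

definition is_tableau :: "tableau \<Rightarrow> bool" where
  "is_tableau T \<longleftrightarrow> (\<forall>rw\<in>set T. sorted_wrt (<) rw) \<and> distinct (concat T) \<and>
     (\<forall>s. Suc s < length T \<longrightarrow> column_strict (T ! s) (T ! Suc s))"

lemma is_tableau_sorted_row: "is_tableau T \<Longrightarrow> rw \<in> set T \<Longrightarrow> sorted_wrt (<) rw"
  by (simp add: is_tableau_def)

lemma is_tableau_distinct: "is_tableau T \<Longrightarrow> distinct (concat T)"
  by (simp add: is_tableau_def)

lemma is_tableau_columns:
  "is_tableau T \<Longrightarrow> Suc s < length T \<Longrightarrow>
     length (T ! Suc s) \<le> length (T ! s) \<and> (\<forall>c<length (T ! Suc s). T ! s ! c < T ! Suc s ! c)"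
  by (simp add: is_tableau_def column_strict_def)

lemma distinct_concat_list_update:
  assumes "distinct (concat T)" "i < length T" "distinct v" "set v \<inter> (entries T - set (T ! i)) = {}"
  shows "distinct (concat (T[i := v]))"
proof -
  have d: "distinct (concat (take i T) @ T ! i @ concat (drop (Suc i) T))"
    using assms(1) id_take_nth_drop[OF assms(2)] by (metis concat.simps(2) concat_append)
  let ?A = "entries (take i T)" and ?B = "set (T ! i)" and ?C = "entries (drop (Suc i) T)"
  have d3: "distinct (concat (take i T))" "distinct (concat (drop (Suc i) T))"
    "?A \<inter> ?B = {}" "?A \<inter> ?C = {}" "?B \<inter> ?C = {}"
    using d by (auto simp: entries_conv)
  have "set v \<inter> ?A = {}" "set v \<inter> ?C = {}"
    using assms(4) entries_list_update_split(2)[OF assms(2)] d3 by auto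
  then have "distinct (concat (take i T) @ v @ concat (drop (Suc i) T))"
    using d3 assms(3) by (auto simp: entries_conv)
  then show ?thesis using assms(2) by (simp add: upd_conv_take_nth_drop)
qed

text \<open>Every change of a tableau below is the replacement of a single row, checked against
  its two neighbours.\<close>

lemma is_tableau_list_update:
  assumes T: "is_tableau T" and i: "i < length T"
    and v: "sorted_wrt (<) v" "set v \<inter> (entries T - set (T ! i)) = {}"
    and above: "0 < i \<Longrightarrow> column_strict (T ! (i - 1)) v"
    and below: "Suc i < length T \<Longrightarrow> column_strict v (T ! Suc i)"
  shows "is_tableau (T[i := v])"
  unfolding is_tableau_def
proof (intro conjI allI impI)
  show "\<forall>rw\<in>set (T[i := v]). sorted_wrt (<) rw"
    using T v(1) set_update_subset_insert[of T i v] by (auto simp: is_tableau_def)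
  show "distinct (concat (T[i := v]))"
    using distinct_concat_list_update[OF is_tableau_distinct[OF T] i] v strict_sorted_iff by blast
  fix s assume "Suc s < length (T[i := v])"
  then show "column_strict (T[i := v] ! s) (T[i := v] ! Suc s)"
    using T above below by (cases "s = i"; cases "Suc s = i") (auto simp: is_tableau_def nth_list_update)
qed

lemma is_tableau_snoc_Nil: "is_tableau T \<Longrightarrow> is_tableau (T @ [[]])"
  by (auto simp: is_tableau_def column_strict_def nth_append less_Suc_eq)

lemma is_tableau_add_to_row:
  assumes T: "is_tableau T" and M: "\<forall>y\<in>entries T. y < M" and r: "1 \<le> r" "r \<le> Suc (length T)"
    and shape: "2 \<le> r \<longrightarrow> length (row T r) < length (row T (r - 1))"
  shows "is_tableau (add_to_row T r M)"
proof -
  define T' where "T' = (if r \<le> length T then T else T @ [[]])"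
  define rw where "rw = T' ! (r - 1)"
  have T': "is_tableau T'" "r - 1 < length T'" "entries T' = entries T"
    using T r is_tableau_snoc_Nil by (auto simp: T'_def)
  have T'_nth: "i < length T \<Longrightarrow> T' ! i = T ! i" for i by (simp add: T'_def nth_append)
  have eq: "add_to_row T r M = T'[r - 1 := rw @ [M]]"
  proof (cases "r \<le> length T")
    case False
    then have "r - 1 = length T" using r by simp
    then show ?thesis using False by (simp add: add_to_row_def T'_def rw_def)
  qed (use r in \<open>auto simp: add_to_row_def T'_def rw_def\<close>)
  have rwM: "\<forall>y\<in>set rw. y < M"
    using M T'(2,3) nth_mem[OF T'(2)] unfolding rw_def entries_def by blast
  show ?thesis unfolding eq
  proof (rule is_tableau_list_update[OF T'(1,2)])
    show "sorted_wrt (<) (rw @ [M])"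
      using is_tableau_sorted_row[OF T'(1) nth_mem[OF T'(2)]] rwM by (simp add: rw_def sorted_wrt_append)
    show "set (rw @ [M]) \<inter> (entries T' - set (T' ! (r - 1))) = {}"
      using M T'(3) by (auto simp: rw_def)
  next
    assume "0 < r - 1"
    then have r2: "2 \<le> r" "r - 2 < length T" using r by auto
    have "length (row T r) < length (row T (r - 1))" using shape r2 by simp
    then have len: "length rw < length (T ! (r - 2))"
      using r2 by (auto simp: rw_def row_def T'_def nth_append numeral_2_eq_2 split: if_splits)
    have "T ! (r - 2) ! c < rw ! c" if "c < length rw" for c
      using is_tableau_columns[OF T'(1), of "r - 2"] r2 T'(2) that T'_nth
      by (auto simp: rw_def numeral_2_eq_2 Suc_diff_Suc)
    moreover have "T ! (r - 2) ! length rw < M" using M nth_in_entries[OF r2(2) len] by blast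
    ultimately show "column_strict (T' ! (r - 1 - 1)) (rw @ [M])"
      using len T'_nth[of "r - 2"] r2
      by (auto simp: column_strict_def nth_append less_Suc_eq numeral_2_eq_2)
  next
    assume "Suc (r - 1) < length T'"
    then show "column_strict (rw @ [M]) (T' ! Suc (r - 1))"
      using is_tableau_columns[OF T'(1), of "r - 1"]
      by (auto simp: column_strict_def rw_def nth_append)
  qed
qed

definition remove_last :: "tableau \<Rightarrow> nat \<Rightarrow> tableau" where
  "remove_last T r = T[r - 1 := butlast (T ! (r - 1))]"

lemma is_tableau_remove_last:
  assumes T: "is_tableau T" and r: "1 \<le> r" "r \<le> length T" and ne: "T ! (r - 1) \<noteq> []"
    and shape: "r < length T \<longrightarrow> length (T ! r) < length (T ! (r - 1))"
  shows "is_tableau (remove_last T r)"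
  unfolding remove_last_def
proof (rule is_tableau_list_update[OF T])
  define rw where "rw = T ! (r - 1)"
  have rl: "r - 1 < length T" using r by simp
  then show "r - 1 < length T" .
  have "rw = butlast rw @ [last rw]" using ne by (simp add: rw_def)
  then show "sorted_wrt (<) (butlast (T ! (r - 1)))"
    using is_tableau_sorted_row[OF T nth_mem[OF rl]] unfolding rw_def by (metis sorted_wrt_append)
  show "set (butlast (T ! (r - 1))) \<inter> (entries T - set (T ! (r - 1))) = {}"
    by (auto dest: in_set_butlastD)
next
  assume "0 < r - 1"
  then have "Suc (r - 1 - 1) < length T" "Suc (r - 1 - 1) = r - 1" using r by auto
  then show "column_strict (T ! (r - 1 - 1)) (butlast (T ! (r - 1)))"
    using is_tableau_columns[OF T, of "r - 1 - 1"] by (auto simp: column_strict_def nth_butlast)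
next
  assume "Suc (r - 1) < length T"
  then show "column_strict (butlast (T ! (r - 1))) (T ! Suc (r - 1))"
    using is_tableau_columns[OF T, of "r - 1"] shape r
    by (auto simp: column_strict_def nth_butlast)
qed

section \<open>Row insertion\<close>

lemma row_ins_shape_entries:
  "row_ins x S = (S', q) \<Longrightarrow> 1 \<le> q \<and> q \<le> length S' \<and> length S \<le> length S' \<and>
     length S' \<le> Suc (length S) \<and> entries S' = insert x (entries S)"
proof (induction x S arbitrary: S' q rule: row_ins.induct)
  case (1 x)
  then show ?case by auto
next
  case (2 x rw rws)
  show ?case
  proof (cases "\<forall>y\<in>set rw. y < x")
    case True
    then show ?thesis using 2(2) by auto
  next
    case False
    define j where "j = length (takeWhile (\<lambda>y. y < x) rw)"
    obtain rws' k where rk: "row_ins (rw ! j) rws = (rws', k)" by fastforce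
    have "j < length rw" using False unfolding j_def by (rule length_takeWhile_less)
    then have "set (rw[j := x]) \<union> {rw ! j} = insert x (set rw)"
      using set_list_update_split[OF \<open>j < length rw\<close>] by auto
    moreover have "S' = rw[j := x] # rws'" "q = Suc k"
      using 2(2) False rk by (auto simp: j_def Let_def)
    ultimately show ?thesis using 2(1)[OF False j_def refl] rk by auto
  qed
qed

lemma row_ins_Cons_append: "\<forall>y\<in>set rw. y < x \<Longrightarrow> row_ins x (rw # rws) = ((rw @ [x]) # rws, 1)"
  by simp

lemma row_ins_Cons_bump:
  assumes "\<not> (\<forall>y\<in>set rw. y < x)" "j = length (takeWhile (\<lambda>y. y < x) rw)"
  shows "row_ins x (rw # rws) =
    ((rw[j := x]) # fst (row_ins (rw ! j) rws), Suc (snd (row_ins (rw ! j) rws)))"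
proof -
  obtain a b where ab: "row_ins (rw ! j) rws = (a, b)" by fastforce
  have "row_ins x (rw # rws) = (let j = length (takeWhile (\<lambda>y. y < x) rw); z = rw ! j;
                (rws', k) = row_ins z rws in ((rw[j := x]) # rws', Suc k))"
    by (simp only: row_ins.simps if_not_P[OF assms(1)])
  then show ?thesis using assms(2) ab by (simp add: Let_def)
qed

declare row_ins.simps(2) [simp del] row_ins_Cons_append [simp]

lemma row_ins_greater: "\<forall>y\<in>entries S. y < x \<Longrightarrow> row_ins x S = (add_to_row S 1 x, 1)"
  by (cases S) simp_all

lemma row_ins_Cons_snoc_bump_greater:
  assumes "\<forall>y\<in>set rw. y < x" "x < M"
  shows "row_ins x ((rw @ [M]) # rws) = ((rw @ [x]) # fst (row_ins M rws), Suc (snd (row_ins M rws)))"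
proof -
  have "length (takeWhile (\<lambda>y. y < x) (rw @ [M])) = length rw" using assms by simp
  then show ?thesis using row_ins_Cons_bump[of "rw @ [M]" x "length rw" rws] assms by simp
qed

lemma row_ins_Cons_snoc_greater:
  assumes "\<not> (\<forall>y\<in>set rw. y < x)" "j = length (takeWhile (\<lambda>y. y < x) rw)"
  shows "row_ins x ((rw @ [M]) # rws) =
    ((rw[j := x] @ [M]) # fst (row_ins (rw ! j) rws), Suc (snd (row_ins (rw ! j) rws)))"
proof -
  have "j < length rw" using assms(1) unfolding assms(2) by (rule length_takeWhile_less)
  obtain y where "y \<in> set rw" "\<not> y < x" using assms(1) by blast
  then have "j = length (takeWhile (\<lambda>y. y < x) (rw @ [M]))"
    using assms(2) takeWhile_append1[of y rw "\<lambda>y. y < x" "[M]"] by simp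
  then show ?thesis
    using row_ins_Cons_bump[of "rw @ [M]" x j rws] assms(1) \<open>j < length rw\<close>
    by (simp add: nth_append list_update_append)
qed

text \<open>This is where the increment in \<open>R(p \<otimes> p\<^sup>\<or>) = (p + 1)\<^sup>\<or> \<otimes> (p + 1)\<close> comes from.\<close>

lemma row_ins_add_to_row_greater:
  assumes "\<forall>y\<in>entries S. y < M" "x < M" "1 \<le> p" "p \<le> Suc (length S)" "row_ins x S = (S', q)"
  shows "row_ins x (add_to_row S p M) =
    (if q = p then (add_to_row S' (Suc p) M, Suc p) else (add_to_row S' p M, q))"
  using assms
proof (induction x S arbitrary: p S' q rule: row_ins.induct)
  case (1 x)
  then show ?case using row_ins_Cons_snoc_bump_greater[of "[]" x M "[]"] by (auto simp: add_to_row_def)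
next
  case (2 x rw rws)
  have rwM: "\<forall>y\<in>entries rws. y < M" using 2(2) by simp
  show ?case
  proof (cases "\<forall>y\<in>set rw. y < x")
    case True
    then have out: "S' = (rw @ [x]) # rws" "q = 1" using 2(6) by auto
    show ?thesis
    proof (cases "p = 1")
      case True
      then show ?thesis
        using out row_ins_Cons_snoc_bump_greater[OF \<open>\<forall>y\<in>set rw. y < x\<close> 2(3), of rws]
          row_ins_greater[OF rwM] add_to_row_Cons_Suc[of 1 "rw @ [x]" rws M] by simp
    next
      case False
      then obtain p' where "p = Suc p'" "1 \<le> p'" using 2(4) by (cases p) auto
      then show ?thesis using out \<open>\<forall>y\<in>set rw. y < x\<close> by (simp add: add_to_row_Cons_Suc)
    qed
  next
    case False
    define j where "j = length (takeWhile (\<lambda>y. y < x) rw)"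
    obtain rws' k where rk: "row_ins (rw ! j) rws = (rws', k)" by fastforce
    have out: "S' = rw[j := x] # rws'" "q = Suc k"
      using 2(6) row_ins_Cons_bump[OF False j_def] rk by auto
    show ?thesis
    proof (cases "p = 1")
      case True
      then show ?thesis
        using out row_ins_Cons_snoc_greater[OF False j_def] rk row_ins_shape_entries[OF rk] by simp
    next
      case False
      then obtain p' where p': "p = Suc p'" "1 \<le> p'" using 2(4) by (cases p) auto
      have "rw ! j < M"
        using 2(2) length_takeWhile_less[OF \<open>\<not> (\<forall>y\<in>set rw. y < x)\<close>] by (simp add: j_def)
      then have IH: "row_ins (rw ! j) (add_to_row rws p' M) =
          (if k = p' then (add_to_row rws' (Suc p') M, Suc p') else (add_to_row rws' p' M, k))"
        using 2(1)[OF \<open>\<not> (\<forall>y\<in>set rw. y < x)\<close> j_def refl, of p' rws' k] rwM p' 2(5) rk by auto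
      show ?thesis
        using row_ins_Cons_bump[OF \<open>\<not> (\<forall>y\<in>set rw. y < x)\<close> j_def, of "add_to_row rws p' M"]
          IH out p' by (auto simp: add_to_row_Cons_Suc)
    qed
  qed
qed

section \<open>Reverse bumping\<close>

text \<open>Rows are 1-based here: \<open>rev_bump_tab T s x\<close> puts \<open>x\<close> into row \<open>s\<close> in place of
  \<open>rev_bump_out T s x\<close>, the largest entry of that row below \<open>x\<close>.\<close>

definition rev_bump_col :: "tableau \<Rightarrow> nat \<Rightarrow> nat \<Rightarrow> nat" where
  "rev_bump_col T s x = length (takeWhile (\<lambda>y. y < x) (T ! (s - 1))) - 1"

definition rev_bump_out :: "tableau \<Rightarrow> nat \<Rightarrow> nat \<Rightarrow> nat" where
  "rev_bump_out T s x = T ! (s - 1) ! rev_bump_col T s x"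

definition rev_bump_tab :: "tableau \<Rightarrow> nat \<Rightarrow> nat \<Rightarrow> tableau" where
  "rev_bump_tab T s x = T[s - 1 := (T ! (s - 1))[rev_bump_col T s x := x]]"

definition rev_bump_ok :: "tableau \<Rightarrow> nat \<Rightarrow> nat \<Rightarrow> bool" where
  "rev_bump_ok T s x \<longleftrightarrow> (\<exists>c<length (T ! (s - 1)). T ! (s - 1) ! c < x \<and>
     (s < length T \<and> c < length (T ! s) \<longrightarrow> x < T ! s ! c))"

lemma rev_bump_Suc:
  "rev_bump T (Suc s) x = rev_bump (rev_bump_tab T (Suc s) x) s (rev_bump_out T (Suc s) x)"
  by (simp add: rev_bump_tab_def rev_bump_out_def rev_bump_col_def Let_def)

context
  fixes T :: tableau and s x :: nat
  assumes T: "is_tableau T" and xT: "x \<notin> entries T" and s: "1 \<le> s" "s \<le> length T"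
    and ok: "rev_bump_ok T s x"
begin

private lemma bump_row_sorted: "sorted_wrt (<) (T ! (s - 1))"
  using is_tableau_sorted_row[OF T] s by simp

private lemma x_notin_bump_row: "x \<notin> set (T ! (s - 1))"
  using xT s by (auto simp: entries_def)

private lemma ok_col:
  obtains c where "c < length (T ! (s - 1))" "T ! (s - 1) ! c < x"
    "c < length (takeWhile (\<lambda>y. y < x) (T ! (s - 1)))"
    "s < length T \<and> c < length (T ! s) \<longrightarrow> x < T ! s ! c"
proof -
  obtain c where c: "c < length (T ! (s - 1))" "T ! (s - 1) ! c < x"
    "s < length T \<and> c < length (T ! s) \<longrightarrow> x < T ! s ! c"
    using ok unfolding rev_bump_ok_def by blast
  then show ?thesis
    using that sorted_nth_less_iff_takeWhile[OF bump_row_sorted x_notin_bump_row c(1)] by blast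
qed

private lemma less_x_iff:
  assumes "i < length (T ! (s - 1))"
  shows "T ! (s - 1) ! i < x \<longleftrightarrow> i \<le> rev_bump_col T s x"
proof -
  obtain c where "c < length (takeWhile (\<lambda>y. y < x) (T ! (s - 1)))" using ok_col by blast
  then show ?thesis
    using sorted_nth_less_iff_takeWhile[OF bump_row_sorted x_notin_bump_row assms]
    unfolding rev_bump_col_def by linarith
qed

lemma rev_bump_col_less: "rev_bump_col T s x < length (T ! (s - 1))"
proof -
  obtain c where "c < length (takeWhile (\<lambda>y. y < x) (T ! (s - 1)))" using ok_col by blast
  then show ?thesis
    using length_takeWhile_le[of "\<lambda>y. y < x" "T ! (s - 1)"] unfolding rev_bump_col_def by linarith
qed

lemma rev_bump_out_less: "rev_bump_out T s x < x"
  using less_x_iff[OF rev_bump_col_less] by (simp add: rev_bump_out_def)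

lemma rev_bump_out_in: "rev_bump_out T s x \<in> set (T ! (s - 1))"
  using rev_bump_col_less by (simp add: rev_bump_out_def)

lemma rev_bump_before: "\<forall>i<rev_bump_col T s x. T ! (s - 1) ! i < rev_bump_out T s x"
  using sorted_wrt_nth_less[OF bump_row_sorted] rev_bump_col_less by (auto simp: rev_bump_out_def)

lemma rev_bump_after:
  "\<forall>i. rev_bump_col T s x < i \<longrightarrow> i < length (T ! (s - 1)) \<longrightarrow> x < T ! (s - 1) ! i"
proof (intro allI impI)
  fix i assume i: "rev_bump_col T s x < i" "i < length (T ! (s - 1))"
  then have "\<not> T ! (s - 1) ! i < x" using less_x_iff by simp
  moreover have "T ! (s - 1) ! i \<noteq> x" using x_notin_bump_row nth_mem[OF i(2)] by auto
  ultimately show "x < T ! (s - 1) ! i" by linarith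
qed

lemma rev_bump_out_max: "\<forall>z\<in>set (T ! (s - 1)). z < x \<longrightarrow> z \<le> rev_bump_out T s x"
proof (intro ballI impI)
  fix z assume "z \<in> set (T ! (s - 1))" "z < x"
  then obtain i where i: "i < length (T ! (s - 1))" "T ! (s - 1) ! i = z"
    by (auto simp: in_set_conv_nth)
  then have "i \<le> rev_bump_col T s x" using less_x_iff[OF i(1)] \<open>z < x\<close> by simp
  then show "z \<le> rev_bump_out T s x"
    using sorted_wrt_nth_less[OF bump_row_sorted, of i "rev_bump_col T s x"] i rev_bump_col_less
    by (cases "i = rev_bump_col T s x") (auto simp: rev_bump_out_def)
qed

lemma rev_bump_col_below:
  assumes below: "s < length T" "rev_bump_col T s x < length (T ! s)"
  shows "x < T ! s ! rev_bump_col T s x"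
proof -
  define j where "j = rev_bump_col T s x"
  obtain c where "c < length (T ! (s - 1))" "T ! (s - 1) ! c < x"
    "s < length T \<and> c < length (T ! s) \<longrightarrow> x < T ! s ! c"
    using ok_col by blast
  then have c: "c \<le> j" "s < length T \<and> c < length (T ! s) \<longrightarrow> x < T ! s ! c"
    using less_x_iff by (auto simp: j_def)
  have "sorted_wrt (<) (T ! s)" using is_tableau_sorted_row[OF T] below(1) by simp
  then have "T ! s ! c \<le> T ! s ! j"
    using sorted_wrt_nth_less[of "(<)" "T ! s" c j] c(1) below by (cases "c = j") (auto simp: j_def)
  then show ?thesis using c below by (simp add: j_def)
qed

lemma length_rev_bump_tab:
  "length (rev_bump_tab T s x) = length T"
  "\<forall>i<length T. length (rev_bump_tab T s x ! i) = length (T ! i)"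
  using s by (auto simp: rev_bump_tab_def nth_list_update)

lemma rev_bump_tab_row: "rev_bump_tab T s x ! (s - 1) = (T ! (s - 1))[rev_bump_col T s x := x]"
  using s by (simp add: rev_bump_tab_def)

lemma rev_bump_tab_other: "i \<noteq> s - 1 \<Longrightarrow> rev_bump_tab T s x ! i = T ! i"
  by (simp add: rev_bump_tab_def)

lemma set_rev_bump_tab_row:
  "set (rev_bump_tab T s x ! (s - 1)) = insert x (set (T ! (s - 1)) - {rev_bump_out T s x})"
proof -
  define rw j where "rw = T ! (s - 1)" and "j = rev_bump_col T s x"
  have "distinct (take j rw @ rw ! j # drop (Suc j) rw)"
    using bump_row_sorted strict_sorted_iff id_take_nth_drop[OF rev_bump_col_less]
    unfolding rw_def j_def by metis
  then have "rw ! j \<notin> set (take j rw) \<union> set (drop (Suc j) rw)" by auto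
  then show ?thesis
    using set_list_update_split[OF rev_bump_col_less] rev_bump_tab_row
    unfolding rev_bump_out_def rw_def j_def by auto
qed

lemma entries_rev_bump_tab:
  "entries (rev_bump_tab T s x) = insert x (entries T - {rev_bump_out T s x})"
proof -
  have sl: "s - 1 < length T" using s by simp
  have "distinct (concat (take (s - 1) T) @ T ! (s - 1) @ concat (drop (Suc (s - 1)) T))"
    using is_tableau_distinct[OF T] id_take_nth_drop[OF sl] by (metis concat.simps(2) concat_append)
  then have "rev_bump_out T s x \<notin> entries (take (s - 1) T) \<union> entries (drop (Suc (s - 1)) T)"
    using rev_bump_out_in by (auto simp: entries_conv)
  moreover have "entries (rev_bump_tab T s x) = entries (take (s - 1) T) \<union>
      set (rev_bump_tab T s x ! (s - 1)) \<union> entries (drop (Suc (s - 1)) T)"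
    unfolding rev_bump_tab_def using entries_list_update_split(1)[OF sl] sl by simp
  ultimately show ?thesis
    using entries_list_update_split(2)[OF sl] set_rev_bump_tab_row xT by auto
qed

lemma is_tableau_rev_bump_tab: "is_tableau (rev_bump_tab T s x)"
  unfolding rev_bump_tab_def
proof (rule is_tableau_list_update[OF T])
  show "s - 1 < length T" using s by simp
  have "\<forall>i<rev_bump_col T s x. T ! (s - 1) ! i < x" using rev_bump_before rev_bump_out_less by auto
  then show "sorted_wrt (<) ((T ! (s - 1))[rev_bump_col T s x := x])"
    using sorted_wrt_list_update[OF bump_row_sorted rev_bump_col_less] rev_bump_after by blast
  show "set ((T ! (s - 1))[rev_bump_col T s x := x]) \<inter> (entries T - set (T ! (s - 1))) = {}"
    using set_update_subset_insert[of "T ! (s - 1)" "rev_bump_col T s x" x] xT by auto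
next
  assume "0 < s - 1"
  then have "Suc (s - 1 - 1) < length T" "Suc (s - 1 - 1) = s - 1" using s by auto
  then have "column_strict (T ! (s - 1 - 1)) (T ! (s - 1))"
    using is_tableau_columns[OF T, of "s - 1 - 1"] by (simp add: column_strict_def)
  moreover have "T ! (s - 1) ! rev_bump_col T s x < x"
    using rev_bump_out_less by (simp add: rev_bump_out_def)
  ultimately show "column_strict (T ! (s - 1 - 1)) ((T ! (s - 1))[rev_bump_col T s x := x])"
    unfolding column_strict_def
    by (metis (no_types, lifting) length_list_update nth_list_update_eq nth_list_update_neq
        order.strict_trans)
next
  assume "Suc (s - 1) < length T"
  then have "column_strict (T ! (s - 1)) (T ! s)" "s < length T"
    using is_tableau_columns[OF T, of "s - 1"] s by (auto simp: column_strict_def)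
  moreover have "(T ! (s - 1))[rev_bump_col T s x := x] ! c < T ! s ! c"
    if "column_strict (T ! (s - 1)) (T ! s)" "c < length (T ! s)" for c
    using that rev_bump_col_below[OF \<open>s < length T\<close>] rev_bump_col_less
    by (cases "c = rev_bump_col T s x") (auto simp: column_strict_def)
  ultimately show "column_strict ((T ! (s - 1))[rev_bump_col T s x := x]) (T ! Suc (s - 1))"
    using s by (simp add: column_strict_def)
qed

lemma rev_bump_ok_rev_bump_tab:
  assumes "2 \<le> s"
  shows "rev_bump_ok (rev_bump_tab T s x) (s - 1) (rev_bump_out T s x)"
proof -
  have above: "Suc (s - 2) < length T" "Suc (s - 2) = s - 1" "s - 1 - 1 = s - 2"
    using assms s by auto
  then have "rev_bump_col T s x < length (T ! (s - 2))"
    "T ! (s - 2) ! rev_bump_col T s x < rev_bump_out T s x"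
    using is_tableau_columns[OF T, of "s - 2"] rev_bump_col_less by (auto simp: rev_bump_out_def)
  then show ?thesis unfolding rev_bump_ok_def
    using above rev_bump_tab_other[of "s - 2"] rev_bump_tab_row rev_bump_col_less rev_bump_out_less
      length_rev_bump_tab
    by (intro exI[of _ "rev_bump_col T s x"]) auto
qed

lemma row_of_rev_bump_out: "row_of T (rev_bump_out T s x) = s"
  using row_of_eq_Suc_iff[OF is_tableau_distinct[OF T], of "rev_bump_out T s x" "s - 1"]
    rev_bump_out_in s by simp

lemma row_of_rev_bump_tab_in: "row_of (rev_bump_tab T s x) x = s"
  using row_of_eq_Suc_iff[OF is_tableau_distinct[OF is_tableau_rev_bump_tab], of x "s - 1"]
    set_rev_bump_tab_row s length_rev_bump_tab by simp

lemma row_of_rev_bump_tab_other: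
  assumes "j \<noteq> x" "j \<noteq> rev_bump_out T s x"
  shows "row_of (rev_bump_tab T s x) j = row_of T j"
proof (cases "row_of T j")
  case 0
  then have "j \<notin> entries (rev_bump_tab T s x)"
    using entries_rev_bump_tab assms row_of_eq_0_iff by auto
  then show ?thesis using 0 row_of_eq_0_iff by metis
next
  case (Suc i)
  have "j \<in> set (rev_bump_tab T s x ! i) \<longleftrightarrow> j \<in> set (T ! i)"
    using set_rev_bump_tab_row rev_bump_tab_other assms by (cases "i = s - 1") auto
  moreover have "i < length T \<and> j \<in> set (T ! i)"
    using Suc row_of_eq_Suc_iff[OF is_tableau_distinct[OF T]] by blast
  ultimately have "row_of (rev_bump_tab T s x) j = Suc i"
    using row_of_eq_Suc_iff[OF is_tableau_distinct[OF is_tableau_rev_bump_tab]] length_rev_bump_tab(1)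
    by simp
  then show ?thesis using Suc by simp
qed

lemma row_ins_rev_bump_out:
  "row_ins (rev_bump_out T s x) ((T ! (s - 1))[rev_bump_col T s x := x] # rows) =
    (T ! (s - 1) # fst (row_ins x rows), Suc (snd (row_ins x rows)))"
proof -
  define rw' where "rw' = (T ! (s - 1))[rev_bump_col T s x := x]"
  have tw: "length (takeWhile (\<lambda>z. z < rev_bump_out T s x) rw') = rev_bump_col T s x"
    unfolding rw'_def by (rule length_takeWhile_eq)
      (use rev_bump_before rev_bump_col_less rev_bump_out_less in \<open>auto simp: nth_list_update\<close>)
  have "x \<in> set rw'" using rev_bump_col_less by (simp add: rw'_def set_update_memI)
  then have "\<not> (\<forall>z\<in>set rw'. z < rev_bump_out T s x)" using rev_bump_out_less by fastforce
  from row_ins_Cons_bump[OF this tw[symmetric]] show ?thesis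
    using rev_bump_col_less by (simp add: rev_bump_out_def rw'_def)
qed

end

lemma row_ins_rev_bump:
  "is_tableau T \<Longrightarrow> x \<notin> entries T \<Longrightarrow> s \<le> length T \<Longrightarrow> (1 \<le> s \<longrightarrow> rev_bump_ok T s x) \<Longrightarrow>
   rev_bump T s x = (T', a) \<Longrightarrow>
   row_ins a T' = (take s T @ fst (row_ins x (drop s T)), s + snd (row_ins x (drop s T)))"
proof (induction s arbitrary: T x)
  case 0
  then show ?case by (cases "row_ins x T") simp
next
  case (Suc s)
  define T1 where "T1 = rev_bump_tab T (Suc s) x"
  define y where "y = rev_bump_out T (Suc s) x"
  have ctx: "is_tableau T" "x \<notin> entries T" "1 \<le> Suc s" "Suc s \<le> length T" "rev_bump_ok T (Suc s) x"
    using Suc.prems by auto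
  have "row_ins a T' = (take s T1 @ fst (row_ins y (drop s T1)), s + snd (row_ins y (drop s T1)))"
  proof (rule Suc.IH)
    show "is_tableau T1" "s \<le> length T1" unfolding T1_def
      using is_tableau_rev_bump_tab[OF ctx] length_rev_bump_tab(1)[OF ctx] ctx(4) by simp_all
    show "y \<notin> entries T1"
      using entries_rev_bump_tab[OF ctx] rev_bump_out_less[OF ctx] by (simp add: T1_def y_def)
    show "1 \<le> s \<longrightarrow> rev_bump_ok T1 s y"
      using rev_bump_ok_rev_bump_tab[OF ctx] by (simp add: T1_def y_def)
    show "rev_bump T1 s y = (T', a)" using Suc.prems(5) rev_bump_Suc T1_def y_def by metis
  qed
  moreover have "drop s T1 = (T ! s)[rev_bump_col T (Suc s) x := x] # drop (Suc s) T"
    using ctx(4) rev_bump_tab_row[OF ctx] Cons_nth_drop_Suc[of s T1] length_rev_bump_tab(1)[OF ctx]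
    by (simp add: T1_def rev_bump_tab_def)
  moreover have "take s T1 = take s T" by (simp add: T1_def rev_bump_tab_def)
  ultimately show ?case
    using row_ins_rev_bump_out[OF ctx] ctx(4) take_Suc_conv_app_nth[of s T] by (simp add: y_def)
qed

section \<open>The DDF insertion run\<close>

text \<open>\<open>ddf_run E Ap I S js\<close> goes through \<open>js\<close> (in the application \<open>L, \<dots>, 1\<close>): an entry \<open>j\<close>
  with \<open>Ap j\<close> (i.e. \<open>j \<in> A'\<close>) has \<open>I j\<close> row-inserted and records the row of the new cell, any
  other \<open>j\<close> just records \<open>E j\<close>. Started at \<open>T\<close> it ends at \<open>P\<close>, and its record will be shown to
  be the dual part \<open>d\<close> of the VXR data.\<close>

fun ddf_run :: "(nat \<Rightarrow> nat) \<Rightarrow> (nat \<Rightarrow> bool) \<Rightarrow> (nat \<Rightarrow> nat) \<Rightarrow> tableau \<Rightarrow> nat list \<Rightarrow> tableau \<times> nat list"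
  where
  "ddf_run E Ap I S [] = (S, [])"
| "ddf_run E Ap I S (j # js) = (if Ap j
     then (fst (ddf_run E Ap I (fst (row_ins (I j) S)) js),
           snd (row_ins (I j) S) # snd (ddf_run E Ap I (fst (row_ins (I j) S)) js))
     else (fst (ddf_run E Ap I S js), E j # snd (ddf_run E Ap I S js)))"

lemma ddf_run_append:
  "ddf_run E Ap I S (xs @ ys) =
   (fst (ddf_run E Ap I (fst (ddf_run E Ap I S xs)) ys),
    snd (ddf_run E Ap I S xs) @ snd (ddf_run E Ap I (fst (ddf_run E Ap I S xs)) ys))"
  by (induction xs arbitrary: S) auto

lemma ddf_run_cong:
  "\<forall>j\<in>set js. Ap j = Ap' j \<and> (Ap j \<longrightarrow> I j = I' j) \<and> (\<not> Ap j \<longrightarrow> E j = E' j) \<Longrightarrow>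
   ddf_run E Ap I S js = ddf_run E' Ap' I' S js"
  by (induction js arbitrary: S) auto

lemma fst_ddf_run_indep: "fst (ddf_run E Ap I S js) = fst (ddf_run E' Ap I S js)"
  by (induction js arbitrary: S) auto

lemma length_ddf_run_record: "length (snd (ddf_run E Ap I S js)) = length js"
  by (induction js arbitrary: S) auto

lemma take_ddf_run_record:
  "take (length xs) (snd (ddf_run E Ap I S (xs @ zs))) = snd (ddf_run E Ap I S xs)"
  using ddf_run_append[of E Ap I S xs zs] length_ddf_run_record[of E Ap I S xs] by simp

lemma ddf_run_shape_entries:
  "length S \<le> length (fst (ddf_run E Ap I S js)) \<and>
   length (fst (ddf_run E Ap I S js)) \<le> length S + length js \<and>
   entries (fst (ddf_run E Ap I S js)) = entries S \<union> I ` {j \<in> set js. Ap j}"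
proof (induction js arbitrary: S)
  case Nil
  then show ?case by simp
next
  case (Cons j js)
  obtain S1 q where r: "row_ins (I j) S = (S1, q)" by fastforce
  then show ?case
    using Cons.IH[of S1] Cons.IH[of S] row_ins_shape_entries[OF r] by (cases "Ap j") auto
qed

lemma ddf_run_record_cases:
  "distinct js \<Longrightarrow> \<exists>Q. (\<forall>E. snd (ddf_run E Ap I S js) = map (\<lambda>j. if Ap j then Q j else E j) js)
     \<and> (\<forall>j\<in>set js. Ap j \<longrightarrow> 1 \<le> Q j \<and> Q j \<le> length S + length js)"
proof (induction js arbitrary: S)
  case Nil
  then show ?case by simp
next
  case (Cons j js)
  obtain S1 q where r: "row_ins (I j) S = (S1, q)" by fastforce
  note rp = row_ins_shape_entries[OF r]
  show ?case
  proof (cases "Ap j")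
    case True
    obtain Q where Q: "\<forall>E. snd (ddf_run E Ap I S1 js) = map (\<lambda>j. if Ap j then Q j else E j) js"
      "\<forall>j\<in>set js. Ap j \<longrightarrow> 1 \<le> Q j \<and> Q j \<le> length S1 + length js"
      using Cons.IH[of S1] Cons.prems by auto
    have "map (\<lambda>i. if Ap i then (Q(j := q)) i else E i) js = map (\<lambda>i. if Ap i then Q i else E i) js"
      for E
      using Cons.prems by (auto intro: map_cong)
    then show ?thesis using True Q r rp by (intro exI[of _ "Q(j := q)"]) auto
  next
    case False
    obtain Q where Q: "\<forall>E. snd (ddf_run E Ap I S js) = map (\<lambda>j. if Ap j then Q j else E j) js"
      "\<forall>j\<in>set js. Ap j \<longrightarrow> 1 \<le> Q j \<and> Q j \<le> length S + length js"
      using Cons.IH[of S] Cons.prems by auto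
    then show ?thesis using False by (intro exI[of _ Q]) auto
  qed
qed

lemma R_carry_append:
  "R_carry N p (xs @ ys) =
    (fst (R_carry N p xs) @ fst (R_carry N (snd (R_carry N p xs)) ys),
     snd (R_carry N (snd (R_carry N p xs)) ys))"
  by (induction xs arbitrary: p) (auto simp: Let_def)

lemma R_carry_no_match: "\<forall>j\<in>set xs. j \<noteq> p \<Longrightarrow> R_carry N p xs = (xs, p)"
  by (induction xs) (auto simp: Let_def R_plain_def R_dual_def)

text \<open>A plain letter \<open>p\<close> carried through the record tracks the row of a new maximal entry \<open>M\<close>
  placed at the end of row \<open>p\<close> before the run. The record entries \<open>E j\<close> are assumed to be
  too large to interact with it.\<close>

lemma R_carry_ddf_run_add_greater:
  assumes "\<forall>y\<in>entries S. y < M" "\<forall>j\<in>set js. Ap j \<longrightarrow> I j < M" "1 \<le> p" "p \<le> Suc (length S)"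
    "\<forall>j\<in>set js. \<not> Ap j \<longrightarrow> B \<le> E j" "p + length js < B" "p + length js < N"
  shows "fst (R_carry N p (snd (ddf_run E Ap I S js))) = snd (ddf_run E Ap I (add_to_row S p M) js)
    \<and> fst (ddf_run E Ap I (add_to_row S p M) js) =
        add_to_row (fst (ddf_run E Ap I S js)) (snd (R_carry N p (snd (ddf_run E Ap I S js)))) M
    \<and> p \<le> snd (R_carry N p (snd (ddf_run E Ap I S js)))
    \<and> snd (R_carry N p (snd (ddf_run E Ap I S js))) \<le> p + length js"
  using assms
proof (induction js arbitrary: S p)
  case Nil
  then show ?case by simp
next
  case (Cons j js)
  show ?case
  proof (cases "Ap j")
    case True
    obtain S1 q where r: "row_ins (I j) S = (S1, q)" by fastforce
    define p' where "p' = (if q = p then Suc p else p)"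
    have carry:
      "R_carry N p (q # rest) = (R_dual N p q # fst (R_carry N p' rest), snd (R_carry N p' rest))"
      for rest using Cons.prems(7) by (simp add: R_plain_def p'_def)
    have ins: "row_ins (I j) (add_to_row S p M) = (add_to_row S1 p' M, R_dual N p q)"
      using row_ins_add_to_row_greater[OF Cons.prems(1) _ Cons.prems(3,4) r] Cons.prems(2,7) True
      by (simp add: p'_def R_dual_def R_plain_def)
    have "fst (R_carry N p' (snd (ddf_run E Ap I S1 js))) = snd (ddf_run E Ap I (add_to_row S1 p' M) js)
      \<and> fst (ddf_run E Ap I (add_to_row S1 p' M) js) =
          add_to_row (fst (ddf_run E Ap I S1 js)) (snd (R_carry N p' (snd (ddf_run E Ap I S1 js)))) M
      \<and> p' \<le> snd (R_carry N p' (snd (ddf_run E Ap I S1 js)))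
      \<and> snd (R_carry N p' (snd (ddf_run E Ap I S1 js))) \<le> p' + length js"
      using Cons.prems row_ins_shape_entries[OF r] True
      by (intro Cons.IH) (auto simp: p'_def)
    then show ?thesis using True r carry ins by (auto simp: p'_def)
  next
    case False
    then have "p < E j" using Cons.prems(5,6) by fastforce
    then have "R_carry N p (E j # rest) = (E j # fst (R_carry N p rest), snd (R_carry N p rest))"
      for rest
      by (simp add: R_plain_def R_dual_def)
    moreover have
      "fst (R_carry N p (snd (ddf_run E Ap I S js))) = snd (ddf_run E Ap I (add_to_row S p M) js)
      \<and> fst (ddf_run E Ap I (add_to_row S p M) js) =
          add_to_row (fst (ddf_run E Ap I S js)) (snd (R_carry N p (snd (ddf_run E Ap I S js)))) M
      \<and> p \<le> snd (R_carry N p (snd (ddf_run E Ap I S js)))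
      \<and> snd (R_carry N p (snd (ddf_run E Ap I S js))) \<le> p + length js"
      using Cons.prems by (intro Cons.IH) auto
    ultimately show ?thesis using False by auto
  qed
qed

section \<open>Reverse bumping seen through the R-matrix\<close>

lemma R_carry_first_match:
  assumes "\<forall>j\<in>set js. j \<noteq> p"
  shows "R_carry N p (js @ p # ys) =
    (js @ R_plain N p p # fst (R_carry N (R_plain N p p) ys), snd (R_carry N (R_plain N p p) ys))"
  using R_carry_no_match[OF assms] by (simp add: R_carry_append R_dual_def Let_def)

lemma R_plain_row_label:
  "1 \<le> s \<Longrightarrow> s < N \<Longrightarrow> R_plain N (N + 1 - s) (N + 1 - s) = (if s = 1 then 1 else N + 1 - (s - 1))"
  by (auto simp: R_plain_def)

lemma row_labels_avoid:
  assumes "distinct (concat T)" "1 \<le> s" "s \<le> length T" "length T < N"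
    and "\<forall>j\<in>J. j \<in> entries T \<longrightarrow> D j = N + 1 - row_of T j"
    and "\<forall>j\<in>J. j \<notin> entries T \<longrightarrow> D j < N + 1 - length T"
    and "J \<inter> set (T ! (s - 1)) = {}"
  shows "\<forall>j\<in>J. D j \<noteq> N + 1 - s"
proof
  fix j assume j: "j \<in> J"
  show "D j \<noteq> N + 1 - s"
  proof (cases "j \<in> entries T")
    case True
    have "row_of T j \<noteq> s"
      using row_of_eq_Suc_iff[OF assms(1), of j "s - 1"] assms(2,7) j by auto
    then show ?thesis using True j assms(4,5) row_of_bounds[OF True] by auto
  next
    case False
    then show ?thesis using j assms(3,6) by fastforce
  qed
qed

text \<open>Carrying \<open>N + 1 - s\<close> down to the first entry \<open>y\<close> below \<open>x\<close> of row \<open>s\<close>: on the way it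
  meets no label equal to itself, and at \<open>y\<close> it moves up to the label of row \<open>s - 1\<close>.\<close>

lemma R_carry_row_label:
  assumes T: "distinct (concat T)" "1 \<le> s" "s \<le> length T" "length T < N"
    and y: "1 \<le> y" "y < x" "y \<in> set (T ! (s - 1))" "\<forall>j\<in>{y<..<x}. j \<notin> set (T ! (s - 1))"
    and D: "\<forall>j\<in>{y..<x}. j \<in> entries T \<longrightarrow> D j = N + 1 - row_of T j"
      "\<forall>j\<in>{y..<x}. j \<notin> entries T \<longrightarrow> D j < N + 1 - length T"
  defines "p \<equiv> if s = 1 then 1 else N + 1 - (s - 1)"
  shows "R_carry N (N + 1 - s) (map D (rev [1..<x])) =
    (map D (rev [Suc y..<x]) @ p # fst (R_carry N p (map D (rev [1..<y]))),
     snd (R_carry N p (map D (rev [1..<y]))))"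
proof -
  have "\<forall>j\<in>set (rev [Suc y..<x]). D j \<noteq> N + 1 - s"
    using y(4) D by (intro row_labels_avoid[OF T]) auto
  then have "\<forall>v\<in>set (map D (rev [Suc y..<x])). v \<noteq> N + 1 - s" by auto
  moreover have "y \<in> entries T" "row_of T y = s"
    using y(3) T(2,3) in_entries_nth row_of_eq_Suc_iff[OF T(1), of y "s - 1"] by auto
  then have "D y = N + 1 - s" using D(1) y(2) by simp
  ultimately show ?thesis
    using R_carry_first_match[of "map D (rev [Suc y..<x])" "N + 1 - s" N "map D (rev [1..<y])"]
      rev_upt_split[OF y(1,2)] R_plain_row_label[of s N] T(2-4)
    by (simp add: p_def)
qed

lemma rev_bump_props:
  assumes "is_tableau T" "x \<notin> entries T" "1 \<le> s" "s \<le> length T" "rev_bump_ok T s x"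
    and "rev_bump T s x = (T', a)"
  shows "a < x \<and> a \<in> entries T \<and> row_of T a = 1 \<and> is_tableau T' \<and>
    entries T' = insert x (entries T - {a}) \<and> length T' = length T \<and>
    (\<forall>i<length T. length (T' ! i) = length (T ! i)) \<and> row_of T' x = s \<and>
    (\<forall>j. j \<noteq> x \<longrightarrow> (j < a \<or> x < j) \<longrightarrow> row_of T' j = row_of T j)"
  using assms
proof (induction s arbitrary: T x)
  case 0
  then show ?case by simp
next
  case (Suc s)
  define T1 where "T1 = rev_bump_tab T (Suc s) x"
  define y where "y = rev_bump_out T (Suc s) x"
  note ctx = Suc.prems(1-5)
  have rb: "rev_bump T1 s y = (T', a)" using Suc.prems(6) rev_bump_Suc T1_def y_def by metis
  have T1: "is_tableau T1" "entries T1 = insert x (entries T - {y})" "length T1 = length T"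
    "\<forall>i<length T. length (T1 ! i) = length (T ! i)" "row_of T1 x = Suc s"
    "\<And>j. j \<noteq> x \<Longrightarrow> j \<noteq> y \<Longrightarrow> row_of T1 j = row_of T j"
    using is_tableau_rev_bump_tab[OF ctx] entries_rev_bump_tab[OF ctx] length_rev_bump_tab[OF ctx]
      row_of_rev_bump_tab_in[OF ctx] row_of_rev_bump_tab_other[OF ctx]
    by (simp_all add: T1_def y_def)
  have y: "y < x" "y \<in> entries T" "row_of T y = Suc s"
    using rev_bump_out_less[OF ctx] rev_bump_out_in[OF ctx] row_of_rev_bump_out[OF ctx] Suc.prems(4)
      nth_mem[of s T] by (auto simp: y_def entries_def)
  show ?case
  proof (cases s)
    case 0
    then show ?thesis using rb T1 y by auto
  next
    case (Suc s')
    have IH: "a < y \<and> a \<in> entries T1 \<and> row_of T1 a = 1 \<and> is_tableau T' \<and>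
      entries T' = insert y (entries T1 - {a}) \<and> length T' = length T1 \<and>
      (\<forall>i<length T1. length (T' ! i) = length (T1 ! i)) \<and> row_of T' y = s \<and>
      (\<forall>j. j \<noteq> y \<longrightarrow> (j < a \<or> y < j) \<longrightarrow> row_of T' j = row_of T1 j)"
    proof (rule Suc.IH[OF T1(1) _ _ _ _ rb])
      show "y \<notin> entries T1" "1 \<le> s" "s \<le> length T1" using T1 y Suc Suc.prems(4) by auto
      show "rev_bump_ok T1 s y"
        using rev_bump_ok_rev_bump_tab[OF ctx] Suc by (simp add: T1_def y_def)
    qed
    then have a: "a \<noteq> x" "a \<noteq> y" using y by auto
    have rows: "row_of T' j = row_of T j" if "j \<noteq> x" "j < a \<or> x < j" for j
    proof -
      have "j \<noteq> y" "j < a \<or> y < j" using that IH y(1) by auto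
      then show ?thesis using IH T1(6) that(1) by metis
    qed
    have "row_of T' x = Suc s" using IH T1(5) y(1) by (metis less_not_refl)
    moreover have "a \<in> entries T" "row_of T a = 1" using IH T1(2,6) a by auto
    moreover have "entries T' = insert x (entries T - {a})" using IH T1(2) y(2) a by auto
    ultimately show ?thesis using IH T1(3,4) y(1) rows by auto
  qed
qed

text \<open>While \<open>x\<close> is reverse bumped from row \<open>s\<close> to the first row, the plain letter
  \<open>N + 1 - s\<close> moves through the labels of the entries below \<open>x\<close>: it passes unchanged until it
  meets the label of the bumped-out entry, which is its own, and then continues one row higher;
  after the first row it has become \<open>1\<close>. The labels it leaves behind are those of the new
  tableau, with label \<open>1\<close> for the ejected entry \<open>a\<close>.\<close>

lemma rev_bump_R_carry:
  assumes "is_tableau T" "x \<notin> entries T" "1 \<le> s" "s \<le> length T" "rev_bump_ok T s x"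
    and "rev_bump T s x = (T', a)" "length T < N" "0 \<notin> entries T"
    and "\<forall>j\<in>{1..<x}. j \<in> entries T \<longrightarrow> D j = N + 1 - row_of T j"
    and "\<forall>j\<in>{1..<x}. j \<notin> entries T \<longrightarrow> D j < N + 1 - length T"
  shows "R_carry N (N + 1 - s) (map D (rev [1..<x])) =
    (map ((\<lambda>j. if j \<in> entries T' then N + 1 - row_of T' j else D j)(a := 1)) (rev [a..<x])
       @ fst (R_carry N 1 (map D (rev [1..<a]))), snd (R_carry N 1 (map D (rev [1..<a]))))"
  using assms
proof (induction s arbitrary: T x)
  case 0
  then show ?case by simp
next
  case (Suc s)
  define T1 where "T1 = rev_bump_tab T (Suc s) x"
  define y where "y = rev_bump_out T (Suc s) x"
  define p where "p = (if s = 0 then 1 else N + 1 - s)"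
  note ctx = Suc.prems(1-5)
  have rb: "rev_bump T1 s y = (T', a)" using Suc.prems(6) rev_bump_Suc T1_def y_def by metis
  have T1: "is_tableau T1" "entries T1 = insert x (entries T - {y})" "length T1 = length T"
    "\<And>j. j \<noteq> x \<Longrightarrow> j \<noteq> y \<Longrightarrow> row_of T1 j = row_of T j"
    using is_tableau_rev_bump_tab[OF ctx] entries_rev_bump_tab[OF ctx] length_rev_bump_tab[OF ctx]
      row_of_rev_bump_tab_other[OF ctx]
    by (simp_all add: T1_def y_def)
  have y0: "y < x" "y \<in> entries T" "row_of T y = Suc s"
    using rev_bump_out_less[OF ctx] rev_bump_out_in[OF ctx] row_of_rev_bump_out[OF ctx] Suc.prems(4)
      nth_mem[of s T] by (auto simp: y_def entries_def)
  have "1 \<le> y" using y0(2) Suc.prems(8) by (cases y) auto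
  note y = y0 this
  have carry: "R_carry N (N + 1 - Suc s) (map D (rev [1..<x])) =
      (map D (rev [Suc y..<x]) @ p # fst (R_carry N p (map D (rev [1..<y]))),
       snd (R_carry N p (map D (rev [1..<y]))))"
  proof -
    have "y \<in> set (T ! (Suc s - 1))" "\<forall>j\<in>{y<..<x}. j \<notin> set (T ! (Suc s - 1))"
      using rev_bump_out_in[OF ctx] rev_bump_out_max[OF ctx] by (force simp: y_def)+
    moreover have "\<forall>j\<in>{y..<x}. j \<in> entries T \<longrightarrow> D j = N + 1 - row_of T j"
      "\<forall>j\<in>{y..<x}. j \<notin> entries T \<longrightarrow> D j < N + 1 - length T"
      using Suc.prems(9,10) y(4) by auto
    ultimately show ?thesis
      using R_carry_row_label[OF is_tableau_distinct[OF Suc.prems(1)] _ Suc.prems(4,7) y(4,1)]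
      by (simp add: p_def)
  qed
  show ?case
  proof (cases s)
    case 0
    then have "T' = T1" "a = y" using rb by auto
    moreover have "\<forall>j. y < j \<longrightarrow> j < x \<longrightarrow> j \<in> entries T1 \<longrightarrow> D j = N + 1 - row_of T1 j"
      using T1(2,4) Suc.prems(9) by auto
    ultimately show ?thesis
      using carry 0 rev_upt_split[of y y x] y(1) by (auto simp: p_def)
  next
    case (Suc s')
    have ok: "rev_bump_ok T1 s y"
      using rev_bump_ok_rev_bump_tab[OF ctx] Suc by (simp add: T1_def y_def)
    have y1: "y \<notin> entries T1" "1 \<le> s" "s \<le> length T1" using T1 y Suc Suc.prems(4) by auto
    have facts: "a < y" "entries T' = insert y (entries T1 - {a})" "row_of T' y = s"
      "\<And>j. y < j \<Longrightarrow> row_of T' j = row_of T1 j"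
      using rev_bump_props[OF T1(1) y1 ok rb] by auto
    have "R_carry N (N + 1 - s) (map D (rev [1..<y])) =
      (map ((\<lambda>j. if j \<in> entries T' then N + 1 - row_of T' j else D j)(a := 1)) (rev [a..<y])
         @ fst (R_carry N 1 (map D (rev [1..<a]))), snd (R_carry N 1 (map D (rev [1..<a]))))"
      using T1 y Suc.prems(7-10) by (intro Suc.IH[OF T1(1) y1 ok rb]) auto
    moreover have "\<forall>j. y < j \<longrightarrow> j < x \<longrightarrow> j \<in> entries T' \<longrightarrow> D j = N + 1 - row_of T' j"
      using facts T1(2,4) Suc.prems(9) by auto
    ultimately show ?thesis
      using carry facts rev_upt_split[of a y x] y(1) Suc by (auto simp: p_def)
  qed
qed

lemma rev_ins_from_eq: "rev_ins_from T r = rev_bump (remove_last T r) (r - 1) (last (T ! (r - 1)))"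
  by (simp add: rev_ins_from_def remove_last_def Let_def)

context
  fixes T :: tableau and r :: nat
  assumes T: "is_tableau T" and r: "1 \<le> r" "r \<le> length T" and ne: "T ! (r - 1) \<noteq> []"
    and shape: "r < length T \<longrightarrow> length (T ! r) < length (T ! (r - 1))"
begin

private lemma last_row_sorted: "sorted_wrt (<) (T ! (r - 1))"
  using is_tableau_sorted_row[OF T] r by simp

lemma last_row_in_entries: "last (T ! (r - 1)) \<in> entries T" "row_of T (last (T ! (r - 1))) = r"
proof -
  have "r - 1 < length T" "last (T ! (r - 1)) \<in> set (T ! (r - 1))" using r ne by auto
  then show "last (T ! (r - 1)) \<in> entries T" "row_of T (last (T ! (r - 1))) = r"
    using in_entries_nth row_of_eq_Suc_iff[OF is_tableau_distinct[OF T], of _ "r - 1"] r by auto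
qed

lemma set_butlast_row: "set (butlast (T ! (r - 1))) = set (T ! (r - 1)) - {last (T ! (r - 1))}"
proof -
  have "distinct (T ! (r - 1))" using last_row_sorted strict_sorted_iff by blast
  then have "distinct (butlast (T ! (r - 1)) @ [last (T ! (r - 1))])" using ne by simp
  moreover have "set (T ! (r - 1)) = set (butlast (T ! (r - 1)) @ [last (T ! (r - 1))])"
    using ne by simp
  ultimately show ?thesis by auto
qed

lemma entries_remove_last: "entries (remove_last T r) = entries T - {last (T ! (r - 1))}"
proof -
  have rl: "r - 1 < length T" using r by simp
  have "distinct (concat (take (r - 1) T) @ T ! (r - 1) @ concat (drop (Suc (r - 1)) T))"
    using is_tableau_distinct[OF T] id_take_nth_drop[OF rl] by (metis concat.simps(2) concat_append)
  then have "last (T ! (r - 1)) \<notin> entries (take (r - 1) T) \<union> entries (drop (Suc (r - 1)) T)"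
    using last_in_set[OF ne] by (auto simp: entries_conv)
  then show ?thesis
    using entries_list_update_split[OF rl] set_butlast_row by (auto simp: remove_last_def)
qed

lemma length_remove_last: "length (remove_last T r) = length T"
  by (simp add: remove_last_def)

lemma row_remove_last:
  "1 \<le> q \<Longrightarrow> row (remove_last T r) q = (if q = r then butlast (T ! (r - 1)) else row T q)"
  using r by (auto simp: row_def nth_list_update remove_last_def)

lemma row_of_remove_last: "j \<noteq> last (T ! (r - 1)) \<Longrightarrow> row_of (remove_last T r) j = row_of T j"
  using row_remove_last set_butlast_row r
  by (intro row_of_eq_if_same_rows[OF is_tableau_distinct[OF T]
        is_tableau_distinct[OF is_tableau_remove_last[OF T r ne shape]]]) (auto simp: row_def)

lemma rev_bump_ok_remove_last:
  assumes "2 \<le> r"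
  shows "rev_bump_ok (remove_last T r) (r - 1) (last (T ! (r - 1)))"
proof -
  define c where "c = length (T ! (r - 1)) - 1"
  have above: "Suc (r - 2) < length T" "Suc (r - 2) = r - 1" "r - 1 - 1 = r - 2"
    using assms r by auto
  have c: "c < length (T ! (r - 1))" "T ! (r - 1) ! c = last (T ! (r - 1))"
    using ne by (auto simp: c_def last_conv_nth)
  then have "c < length (T ! (r - 2))" "T ! (r - 2) ! c < last (T ! (r - 1))"
    using is_tableau_columns[OF T above(1)] above(2) by auto
  moreover have "remove_last T r ! (r - 2) = T ! (r - 2)"
    "remove_last T r ! (r - 1) = butlast (T ! (r - 1))"
    using above r by (auto simp: remove_last_def)
  ultimately show ?thesis
    unfolding rev_bump_ok_def using c above(3) by (intro exI[of _ c]) (auto simp: c_def)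
qed

lemma row_ins_rev_ins_from:
  assumes "rev_ins_from T r = (T', a)"
  shows "row_ins a T' = (T, r)"
proof -
  define x where "x = last (T ! (r - 1))"
  have rl: "r - 1 < length T" using r by simp
  have rb: "rev_bump (remove_last T r) (r - 1) x = (T', a)"
    using assms rev_ins_from_eq[of T r] by (simp add: x_def)
  have "row_ins a T' =
      (take (r - 1) (remove_last T r) @ fst (row_ins x (drop (r - 1) (remove_last T r))),
       r - 1 + snd (row_ins x (drop (r - 1) (remove_last T r))))"
    using rev_bump_ok_remove_last entries_remove_last length_remove_last r
    by (intro row_ins_rev_bump[OF is_tableau_remove_last[OF T r ne shape] _ _ _ rb])
      (auto simp: x_def)
  moreover have "drop (r - 1) (remove_last T r) = butlast (T ! (r - 1)) # drop r T"
    using Cons_nth_drop_Suc[of "r - 1" "remove_last T r"] rl r by (simp add: remove_last_def)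
  moreover have "\<forall>y\<in>set (butlast (T ! (r - 1))). y < x"
    using last_row_sorted append_butlast_last_id[OF ne] unfolding x_def
    by (metis sorted_wrt_append list.set_intros(1))
  then have "row_ins x (butlast (T ! (r - 1)) # drop r T) = (T ! (r - 1) # drop r T, 1)"
    using append_butlast_last_id[OF ne] by (simp add: x_def)
  moreover have "take (r - 1) T @ T ! (r - 1) # drop r T = T"
    using id_take_nth_drop[OF rl] r by simp
  ultimately show ?thesis using r by (simp add: remove_last_def)
qed

lemma rev_ins_from_props:
  assumes "rev_ins_from T r = (T', a)"
  shows "a \<in> entries T \<and> row_of T a = 1 \<and> is_tableau T' \<and> entries T' = entries T - {a} \<and>
    length T' = length T \<and>
    (\<forall>q\<ge>1. length (row T' q) = (if q = r then length (row T r) - 1 else length (row T q))) \<and>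
    (\<forall>j\<in>entries T'. j < a \<longrightarrow> row_of T' j = row_of T j)"
proof -
  define x where "x = last (T ! (r - 1))"
  define T0 where "T0 = remove_last T r"
  have rb: "rev_bump T0 (r - 1) x = (T', a)"
    using assms rev_ins_from_eq[of T r] by (simp add: x_def T0_def)
  have T0: "is_tableau T0" "x \<notin> entries T0" "length T0 = length T"
    "\<forall>q\<ge>1. length (row T0 q) = (if q = r then length (row T r) - 1 else length (row T q))"
    using is_tableau_remove_last[OF T r ne shape] entries_remove_last length_remove_last
      row_remove_last r
    by (auto simp: row_def x_def T0_def)
  show ?thesis
  proof (cases "r = 1")
    case True
    then show ?thesis
      using rb T0 entries_remove_last last_row_in_entries row_of_remove_last
      by (auto simp: x_def T0_def)
  next
    case False
    then have "1 \<le> r - 1" "r - 1 \<le> length T0" using r T0(3) by auto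
    from rev_bump_props[OF T0(1,2) this _ rb] rev_bump_ok_remove_last False r
    have facts: "a < x" "a \<in> entries T0" "row_of T0 a = 1" "is_tableau T'"
      "entries T' = insert x (entries T0 - {a})" "length T' = length T0"
      "\<forall>i<length T0. length (T' ! i) = length (T0 ! i)"
      "\<forall>j. j < a \<longrightarrow> row_of T' j = row_of T0 j"
      by (auto simp: x_def T0_def)
    then have "\<forall>q\<ge>1. length (row T' q) = length (row T0 q)" by (auto simp: row_def)
    then show ?thesis
      using facts T0 entries_remove_last last_row_in_entries row_of_remove_last
      by (auto simp: x_def T0_def)
  qed
qed

lemma rev_ins_from_R_carry:
  assumes "rev_ins_from T r = (T', a)" "entries T \<subseteq> {1..k}" "length T < N"
    and "\<forall>j\<in>{1..k}. j \<in> entries T \<longrightarrow> D j = N + 1 - row_of T j"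
    and "\<forall>j\<in>{1..k}. j \<notin> entries T \<longrightarrow> D j < N + 1 - length T"
  shows "R_carry N (N + 1 - r) (map D (rev [1..<Suc k])) =
    (map ((\<lambda>j. if j \<in> entries T' then N + 1 - row_of T' j else D j)(a := 1)) (rev [a..<Suc k])
       @ fst (R_carry N 1 (map D (rev [1..<a]))), snd (R_carry N 1 (map D (rev [1..<a]))))"
proof -
  define x where "x = last (T ! (r - 1))"
  define T0 where "T0 = remove_last T r"
  define p where "p = (if r = 1 then 1 else N + 1 - (r - 1))"
  have rb: "rev_bump T0 (r - 1) x = (T', a)"
    using assms(1) rev_ins_from_eq[of T r] by (simp add: x_def T0_def)
  have x: "x \<in> entries T" "row_of T x = r" "1 \<le> x" "x \<le> k"
    using last_row_in_entries assms(2) by (auto simp: x_def)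
  have carry: "R_carry N (N + 1 - r) (map D (rev [1..<Suc k])) =
      (map D (rev [Suc x..<Suc k]) @ p # fst (R_carry N p (map D (rev [1..<x]))),
       snd (R_carry N p (map D (rev [1..<x]))))"
  proof -
    have "x \<in> set (T ! (r - 1))" "\<forall>j\<in>{x<..<Suc k}. j \<notin> set (T ! (r - 1))"
      using ne sorted_wrt_le_last[OF last_row_sorted] by (force simp: x_def)+
    moreover have "\<forall>j\<in>{x..<Suc k}. j \<in> entries T \<longrightarrow> D j = N + 1 - row_of T j"
      "\<forall>j\<in>{x..<Suc k}. j \<notin> entries T \<longrightarrow> D j < N + 1 - length T"
      using assms(4,5) x(3) by auto
    moreover have "x < Suc k" using x(4) by simp
    ultimately show ?thesis
      using R_carry_row_label[OF is_tableau_distinct[OF T] r assms(3) x(3)]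
      by (simp del: upt_Suc add: p_def)
  qed
  have T0: "is_tableau T0" "x \<notin> entries T0" "length T0 = length T" "entries T0 = entries T - {x}"
    "\<And>j. j \<noteq> x \<Longrightarrow> row_of T0 j = row_of T j"
    using is_tableau_remove_last[OF T r ne shape] entries_remove_last row_of_remove_last
      length_remove_last
    by (auto simp: x_def T0_def)
  show ?thesis
  proof (cases "r = 1")
    case True
    then have "T' = T0" "a = x" using rb by auto
    moreover have "\<forall>j. x < j \<longrightarrow> j \<le> k \<longrightarrow> j \<in> entries T0 \<longrightarrow> D j = N + 1 - row_of T0 j"
      using T0(4,5) assms(4) x by auto
    ultimately show ?thesis
      using carry True rev_upt_split[of x x "Suc k"] x by (auto simp: p_def)
  next
    case False
    then have s: "1 \<le> r - 1" "r - 1 \<le> length T0" using r T0(3) by auto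
    have ok: "rev_bump_ok T0 (r - 1) x"
      using rev_bump_ok_remove_last False r by (simp add: x_def T0_def)
    have facts: "a < x" "entries T' = insert x (entries T0 - {a})" "row_of T' x = r - 1"
      "\<And>j. x < j \<Longrightarrow> row_of T' j = row_of T0 j"
      using rev_bump_props[OF T0(1,2) s ok rb] by auto
    have "R_carry N (N + 1 - (r - 1)) (map D (rev [1..<x])) =
      (map ((\<lambda>j. if j \<in> entries T' then N + 1 - row_of T' j else D j)(a := 1)) (rev [a..<x])
         @ fst (R_carry N 1 (map D (rev [1..<a]))), snd (R_carry N 1 (map D (rev [1..<a]))))"
    proof (rule rev_bump_R_carry[OF T0(1,2) s ok rb])
      show "length T0 < N" "0 \<notin> entries T0" using T0(3,4) assms(2,3) by auto
      show "\<forall>j\<in>{1..<x}. j \<in> entries T0 \<longrightarrow> D j = N + 1 - row_of T0 j"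
        using T0(4,5) assms(4) x(4) by simp
      show "\<forall>j\<in>{1..<x}. j \<notin> entries T0 \<longrightarrow> D j < N + 1 - length T0"
        using T0(3,4) assms(5) x(1,4) by simp
    qed
    moreover have "\<forall>j. x < j \<longrightarrow> j \<le> k \<longrightarrow> j \<in> entries T' \<longrightarrow> D j = N + 1 - row_of T' j"
      using facts T0(4,5) assms(4) x by auto
    ultimately show ?thesis
      using carry facts False rev_upt_split[of a x "Suc k"] x by (auto simp: p_def)
  qed
qed

end

section \<open>The invariant relating the DDF and VXR data\<close>

definition T_dual :: "nat \<Rightarrow> tableau \<Rightarrow> nat \<Rightarrow> nat" where
  "T_dual N T j = N + 1 - row_of T j"

definition off_tableau :: "tableau \<Rightarrow> nat \<Rightarrow> bool" where
  "off_tableau T j \<longleftrightarrow> j \<notin> entries T"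

definition full_run :: "nat \<Rightarrow> nat \<Rightarrow> tableau \<Rightarrow> (nat \<Rightarrow> nat) \<Rightarrow> tableau \<times> nat list" where
  "full_run N k T I = ddf_run (T_dual N T) (off_tableau T) I T (rev [1..<Suc k])"

text \<open>After the first \<open>k\<close> letters, with shape \<open>sh\<close>, DDF data \<open>(T, I)\<close> and VXR data \<open>(d, c)\<close>
  (stored as in \<^const>\<open>vxr\<close>): \<open>d\<close> is the record of the full run and \<open>c\<close> gives the rows of its
  final tableau.\<close>

definition vxr_ddf_inv ::
  "nat \<Rightarrow> nat \<Rightarrow> (nat \<Rightarrow> nat) \<Rightarrow> tableau \<Rightarrow> (nat \<Rightarrow> nat) \<Rightarrow> nat list \<Rightarrow> nat list \<Rightarrow> bool" where
  "vxr_ddf_inv N k sh T I d c \<longleftrightarrow> is_tableau T \<and> entries T \<subseteq> {1..k} \<and> length T \<le> k \<and>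
     (\<forall>r\<ge>1. length (row T r) = sh r) \<and>
     (\<forall>j. 1 \<le> j \<and> j \<le> k \<and> j \<notin> entries T \<longrightarrow> 1 \<le> I j \<and> I j \<le> k) \<and>
     d = snd (full_run N k T I) \<and> length c = k \<and>
     (\<forall>j. 1 \<le> j \<and> j \<le> k \<longrightarrow> j \<in> set (row (fst (full_run N k T I)) (c ! (k - j))))"

lemma T_dual_lower: "length T \<le> k \<Longrightarrow> \<not> off_tableau T j \<Longrightarrow> N + 1 - k \<le> T_dual N T j"
  using row_of_bounds[of j T] by (auto simp: off_tableau_def T_dual_def)

lemma R_carry_run_add_greater:
  assumes "length T \<le> k" "\<forall>y\<in>entries S. y < Suc k" "\<forall>j\<in>set js. off_tableau T j \<longrightarrow> I j \<le> k"
    "1 \<le> p" "p \<le> Suc (length S)" "p + length js + k < N"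
  defines "run \<equiv> ddf_run (T_dual N T) (off_tableau T) I"
  shows "fst (R_carry N p (snd (run S js))) = snd (run (add_to_row S p (Suc k)) js)
    \<and> fst (run (add_to_row S p (Suc k)) js) =
        add_to_row (fst (run S js)) (snd (R_carry N p (snd (run S js)))) (Suc k)
    \<and> 1 \<le> snd (R_carry N p (snd (run S js)))"
proof -
  have "\<forall>j\<in>set js. off_tableau T j \<longrightarrow> I j < Suc k" using assms(3) by auto
  moreover have "\<forall>j\<in>set js. \<not> off_tableau T j \<longrightarrow> N + 1 - k \<le> T_dual N T j"
    using T_dual_lower[OF assms(1)] by blast
  moreover have "p + length js < N + 1 - k" "p + length js < N" using assms(6) by auto
  ultimately have "fst (R_carry N p (snd (run S js))) = snd (run (add_to_row S p (Suc k)) js)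
    \<and> fst (run (add_to_row S p (Suc k)) js) =
        add_to_row (fst (run S js)) (snd (R_carry N p (snd (run S js)))) (Suc k)
    \<and> p \<le> snd (R_carry N p (snd (run S js)))"
    using R_carry_ddf_run_add_greater[OF assms(2) _ assms(4,5)] unfolding run_def by blast
  then show ?thesis using assms(4) by (elim conjE) simp
qed

lemma in_row_add_to_row_shift:
  assumes "\<forall>j. 1 \<le> j \<and> j \<le> k \<longrightarrow> j \<in> set (row P (c ! (k - j)))" "1 \<le> p"
  shows "\<forall>j. 1 \<le> j \<and> j \<le> Suc k \<longrightarrow> j \<in> set (row (add_to_row P p (Suc k)) ((p # c) ! (Suc k - j)))"
proof (intro allI impI)
  fix j assume j: "1 \<le> j \<and> j \<le> Suc k"
  show "j \<in> set (row (add_to_row P p (Suc k)) ((p # c) ! (Suc k - j)))"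
  proof (cases "j = Suc k")
    case True
    then show ?thesis using in_row_add_to_row_iff[OF assms(2) assms(2)] by simp
  next
    case False
    then have "j \<in> set (row P (c ! (k - j)))" "(p # c) ! (Suc k - j) = c ! (k - j)"
      using j assms(1) by (auto simp: Suc_diff_le)
    then show ?thesis using in_row_add_to_row_iff[OF assms(2) in_row_pos] by simp
  qed
qed

lemma partition_add_cell:
  assumes "\<forall>q\<ge>1. length (row T q) = sh q" "1 \<le> r" "is_partition (sh(r := sh r + 1))"
  shows "r \<le> Suc (length T)" "2 \<le> r \<longrightarrow> length (row T r) < length (row T (r - 1))"
proof -
  have "sh r + 1 \<le> sh (r - 1)" if "2 \<le> r"
  proof -
    have "\<forall>q\<ge>1. (sh(r := sh r + 1)) (Suc q) \<le> (sh(r := sh r + 1)) q"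
      using assms(3) unfolding is_partition_def by blast
    moreover have "1 \<le> r - 1" using that by simp
    ultimately have "(sh(r := sh r + 1)) (Suc (r - 1)) \<le> (sh(r := sh r + 1)) (r - 1)" by blast
    moreover have "Suc (r - 1) = r" "r - 1 \<noteq> r" using that by auto
    ultimately show ?thesis by simp
  qed
  then show *: "2 \<le> r \<longrightarrow> length (row T r) < length (row T (r - 1))"
    using assms(1)[rule_format, of r] assms(1)[rule_format, of "r - 1"] assms(2) by auto
  show "r \<le> Suc (length T)"
  proof (cases "2 \<le> r")
    case True
    then have "0 < length (row T (r - 1))" using * by linarith
    then show ?thesis by (auto simp: row_def split: if_splits)
  qed (use assms(2) in simp)
qed

lemma partition_remove_cell:
  assumes "\<forall>q\<ge>1. length (row T q) = sh q" "1 \<le> r" "0 < sh r" "is_partition (sh(r := sh r - 1))"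
  shows "r \<le> length T" "T ! (r - 1) \<noteq> []" "r < length T \<longrightarrow> length (T ! r) < length (T ! (r - 1))"
proof -
  have "0 < length (row T r)" using assms(1-3) by simp
  then show rl: "r \<le> length T" and ne: "T ! (r - 1) \<noteq> []" by (auto simp: row_def split: if_splits)
  have "(sh(r := sh r - 1)) (Suc r) \<le> (sh(r := sh r - 1)) r"
    using assms(2,4) unfolding is_partition_def by blast
  then have "sh (Suc r) \<le> sh r - 1" by simp
  moreover have "sh r = length (T ! (r - 1))" using assms(1,2) rl by (auto simp: row_def)
  moreover have "r < length T \<Longrightarrow> sh (Suc r) = length (T ! r)"
    using assms(1)[rule_format, of "Suc r"] by (simp add: row_def)
  ultimately show "r < length T \<longrightarrow> length (T ! r) < length (T ! (r - 1))"
    using ne by (cases "T ! (r - 1)") auto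
qed

lemma vxr_ddf_invD:
  assumes "vxr_ddf_inv N k sh T I d c"
  defines "run \<equiv> ddf_run (T_dual N T) (off_tableau T) I"
  shows "is_tableau T" "entries T \<subseteq> {1..k}" "length T \<le> k" "\<forall>q\<ge>1. length (row T q) = sh q"
    "\<forall>j. 1 \<le> j \<and> j \<le> k \<and> j \<notin> entries T \<longrightarrow> 1 \<le> I j \<and> I j \<le> k"
    "d = snd (run T (rev [1..<Suc k]))" "length c = k"
    "\<forall>j. 1 \<le> j \<and> j \<le> k \<longrightarrow> j \<in> set (row (fst (run T (rev [1..<Suc k]))) (c ! (k - j)))"
  using assms unfolding vxr_ddf_inv_def full_run_def by auto

lemma vxr_ddf_inv_Add:
  assumes inv: "vxr_ddf_inv N k sh T I d c" and r: "1 \<le> r" and part: "is_partition (sh(r := sh r + 1))"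
    and N: "4 * k + 8 \<le> N"
  shows "vxr_ddf_inv N (Suc k) (sh(r := sh r + 1)) (add_to_row T r (Suc k)) I
    (Psi_dual N (Add r) # fst (R_carry N (Psi_plain N (Add r)) d))
    (snd (R_carry N (Psi_plain N (Add r)) d) # c)"
proof -
  define js where "js = rev [1..<Suc k]"
  define T' where "T' = add_to_row T r (Suc k)"
  define run where "run = ddf_run (T_dual N T) (off_tableau T) I"
  note T = vxr_ddf_invD[OF inv, folded run_def js_def]
  note shape = partition_add_cell[OF T(4) r part]
  have M: "\<forall>y\<in>entries T. y < Suc k" using T(2) by auto
  have T': "is_tableau T'" "entries T' = insert (Suc k) (entries T)" "length T' \<le> Suc k"
    "\<forall>q\<ge>1. length (row T' q) = (sh(r := sh r + 1)) q"
    using is_tableau_add_to_row[OF T(1) M r shape] entries_add_to_row[OF r] length_add_to_row[OF r]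
      row_add_to_row[OF r] shape T(3,4) by (auto simp: T'_def)
  have rows: "1 \<le> q \<Longrightarrow> j \<in> set (row T' q) \<longleftrightarrow> j \<in> set (row T q) \<or> (j = Suc k \<and> q = r)" for q j
    using in_row_add_to_row_iff[OF r] by (simp add: T'_def)
  have row_of': "row_of T' (Suc k) = r" "\<And>j. j \<noteq> Suc k \<Longrightarrow> row_of T' j = row_of T j"
    using in_row_iff[OF is_tableau_distinct[OF T'(1)] r, of "Suc k"] rows[OF r] T'(2)
      row_of_eq_if_same_rows[OF is_tableau_distinct[OF T(1)] is_tableau_distinct[OF T'(1)]] rows
    by auto
  have "ddf_run (T_dual N T') (off_tableau T') I T' js = run T' js"
    unfolding run_def using T'(2) row_of' T(2)
    by (intro ddf_run_cong) (auto simp: js_def off_tableau_def T_dual_def)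
  then have run': "full_run N (Suc k) T' I = (fst (run T' js), (N + 1 - r) # snd (run T' js))"
    using T'(2) row_of' by (simp add: full_run_def js_def off_tableau_def T_dual_def)
  have js: "set js = {1..k}" "length js = k" by (auto simp: js_def)
  have "\<forall>j\<in>set js. off_tableau T j \<longrightarrow> I j \<le> k" "r + length js + k < N"
    using js T(3,5) shape(1) N by (auto simp: off_tableau_def)
  then have carry: "fst (R_carry N r d) = snd (run T' js)"
    "fst (run T' js) = add_to_row (fst (run T js)) (snd (R_carry N r d)) (Suc k)"
    "1 \<le> snd (R_carry N r d)"
    using R_carry_run_add_greater[OF T(3) M _ r shape(1), of js I N] T(6)
    unfolding T'_def run_def by auto
  show ?thesis
    unfolding vxr_ddf_inv_def T'_def[symmetric]
    using T' T(2,5,7) run' carry in_row_add_to_row_shift[OF T(8) carry(3)]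
    by (auto simp: Psi_dual_def Psi_plain_def T(6) js_def)
qed

lemma vxr_ddf_inv_Emp:
  assumes inv: "vxr_ddf_inv N k sh T I d c" and N: "4 * k + 8 \<le> N"
  shows "vxr_ddf_inv N (Suc k) sh T (I(Suc k := Suc k))
    (Psi_dual N Emp # fst (R_carry N (Psi_plain N Emp) d)) (snd (R_carry N (Psi_plain N Emp) d) # c)"
proof -
  define js where "js = rev [1..<Suc k]"
  define run where "run = ddf_run (T_dual N T) (off_tableau T) I"
  note T = vxr_ddf_invD[OF inv, folded run_def js_def]
  have M: "\<forall>y\<in>entries T. y < Suc k" using T(2) by auto
  have js: "set js = {1..k}" "length js = k" by (auto simp: js_def)
  have "ddf_run (T_dual N T) (off_tableau T) (I(Suc k := Suc k)) S js = run S js" for S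
    unfolding run_def using js by (intro ddf_run_cong) auto
  then have run': "full_run N (Suc k) T (I(Suc k := Suc k)) =
      (fst (run (add_to_row T 1 (Suc k)) js), 1 # snd (run (add_to_row T 1 (Suc k)) js))"
  proof -
    have "rev [1..<Suc (Suc k)] = Suc k # js" "Suc k \<notin> entries T" using M by (auto simp: js_def)
    then show ?thesis
      using row_ins_greater[OF M] \<open>\<And>S. _ = run S js\<close> by (simp add: full_run_def off_tableau_def)
  qed
  have "\<forall>j\<in>set js. off_tableau T j \<longrightarrow> I j \<le> k" "1 + length js + k < N"
    using js T(5) N by (auto simp: off_tableau_def)
  then have carry: "fst (R_carry N 1 d) = snd (run (add_to_row T 1 (Suc k)) js)"
    "fst (run (add_to_row T 1 (Suc k)) js) = add_to_row (fst (run T js)) (snd (R_carry N 1 d)) (Suc k)"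
    "1 \<le> snd (R_carry N 1 d)"
    using R_carry_run_add_greater[OF T(3) M _ _ _, of js I 1 N] T(6) unfolding run_def by auto
  show ?thesis
    unfolding vxr_ddf_inv_def
    using T(1-5,7) run' carry in_row_add_to_row_shift[OF T(8) carry(3)]
    by (auto simp: Psi_dual_def Psi_plain_def T(6) js_def)
qed

text \<open>Removing a cell: the new first step re-inserts the ejected \<open>a\<close>, restoring \<open>T\<close>, and
  at \<open>a\<close> (now paired with \<open>k + 1\<close>) the new maximal entry is placed at the end of row 1.\<close>

lemma full_run_rev_ins_from:
  fixes N :: nat
  assumes T: "is_tableau T" "entries T \<subseteq> {1..k}"
    and rem: "row_ins a T' = (T, r)" "a \<in> entries T" "entries T' = entries T - {a}"
      "\<forall>j\<in>entries T'. j < a \<longrightarrow> row_of T' j = row_of T j"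
    and I: "\<forall>j. 1 \<le> j \<and> j \<le> k \<and> j \<notin> entries T \<longrightarrow> 1 \<le> I j \<and> I j \<le> k"
    and Q: "\<forall>E. snd (ddf_run E (off_tableau T) I T (rev [1..<Suc k])) =
      map (\<lambda>j. if off_tableau T j then Q j else E j) (rev [1..<Suc k])"
  defines "run \<equiv> ddf_run (T_dual N T) (off_tableau T) I"
    and "xs \<equiv> rev [Suc a..<Suc k]" and "ys \<equiv> rev [1..<a]"
    and "S1 \<equiv> fst (ddf_run (T_dual N T) (off_tableau T) I T (rev [Suc a..<Suc k]))"
  shows "full_run N (Suc k) T' (I(a := Suc k, Suc k := a)) =
    (fst (run (add_to_row S1 1 (Suc k)) ys),
     r # map (\<lambda>j. if off_tableau T j then Q j else T_dual N T' j) xs @ 1 #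
       snd (run (add_to_row S1 1 (Suc k)) ys))"
proof -
  define run' where "run' = ddf_run (T_dual N T') (off_tableau T') (I(a := Suc k, Suc k := a))"
  have a: "1 \<le> a" "a \<le> k" using rem(2) T(2) by auto
  have js: "rev [1..<Suc k] = xs @ a # ys"
    unfolding xs_def ys_def by (rule rev_upt_split) (use a in auto)
  have xs: "\<forall>j\<in>set xs. a < j \<and> j \<le> k" and ys: "\<forall>j\<in>set ys. 1 \<le> j \<and> j < a"
    by (auto simp: xs_def ys_def)
  have "run' T xs = ddf_run (T_dual N T') (off_tableau T) I T xs"
    unfolding run'_def using rem(3) xs by (intro ddf_run_cong) (auto simp: off_tableau_def)
  moreover have "snd (ddf_run (T_dual N T') (off_tableau T) I T xs) =
      map (\<lambda>j. if off_tableau T j then Q j else T_dual N T' j) xs"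
  proof -
    have "snd (ddf_run (T_dual N T') (off_tableau T) I T (xs @ a # ys)) =
        map (\<lambda>j. if off_tableau T j then Q j else T_dual N T' j) (xs @ a # ys)"
      using Q unfolding js by blast
    from arg_cong[OF this, of "take (length xs)"] show ?thesis
      by (simp only: take_ddf_run_record) simp
  qed
  moreover have "fst (ddf_run (T_dual N T') (off_tableau T) I T xs) = S1"
    unfolding S1_def xs_def by (rule fst_ddf_run_indep)
  moreover have "\<forall>y\<in>entries S1. y < Suc k"
  proof -
    have "entries S1 = entries T \<union> I ` {j \<in> set xs. off_tableau T j}"
      using ddf_run_shape_entries unfolding S1_def xs_def by blast
    moreover have "I ` {j \<in> set xs. off_tableau T j} \<subseteq> {1..k}"
      using I xs by (auto simp: off_tableau_def)
    ultimately show ?thesis using T(2) by auto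
  qed
  then have "row_ins (Suc k) S1 = (add_to_row S1 1 (Suc k), 1)" by (rule row_ins_greater)
  moreover have "run' S ys = run S ys" for S
    unfolding run'_def run_def using rem(3,4) ys a
    by (intro ddf_run_cong) (auto simp: off_tableau_def T_dual_def)
  moreover have "Suc k \<notin> entries T'" "a \<notin> entries T'" "a \<noteq> Suc k" using rem(3) T(2) a by auto
  then have "run' T' (Suc k # zs) = (fst (run' T zs), r # snd (run' T zs))"
    and "run' S1 (a # zs) = (fst (run' (add_to_row S1 1 (Suc k)) zs),
      1 # snd (run' (add_to_row S1 1 (Suc k)) zs))" for zs
    using rem(1) \<open>row_ins (Suc k) S1 = (add_to_row S1 1 (Suc k), 1)\<close>
    by (simp_all add: run'_def off_tableau_def)
  moreover have "run' T (xs @ a # ys) =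
      (fst (run' (fst (run' T xs)) (a # ys)), snd (run' T xs) @ snd (run' (fst (run' T xs)) (a # ys)))"
    unfolding run'_def by (rule ddf_run_append)
  ultimately show ?thesis
    unfolding full_run_def run'_def[symmetric] rev_upt_Suc js by simp
qed

lemma full_run_split:
  fixes N :: nat
  assumes "a \<in> entries T" "entries T \<subseteq> {1..k}"
    and I: "\<forall>j. 1 \<le> j \<and> j \<le> k \<and> j \<notin> entries T \<longrightarrow> 1 \<le> I j \<and> I j \<le> k"
  defines "run \<equiv> ddf_run (T_dual N T) (off_tableau T) I"
    and "S1 \<equiv> fst (ddf_run (T_dual N T) (off_tableau T) I T (rev [Suc a..<Suc k]))"
  shows "full_run N k T I =
      (fst (run S1 (rev [1..<a])),
       snd (run T (rev [Suc a..<Suc k])) @ T_dual N T a # snd (run S1 (rev [1..<a])))"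
    and "\<forall>y\<in>entries S1. y < Suc k"
proof -
  have "rev [1..<Suc k] = rev [Suc a..<Suc k] @ a # rev [1..<a]"
    using rev_upt_split[of 1 a "Suc k"] assms(1,2) by (force simp del: upt_Suc)
  then show "full_run N k T I =
      (fst (run S1 (rev [1..<a])),
       snd (run T (rev [Suc a..<Suc k])) @ T_dual N T a # snd (run S1 (rev [1..<a])))"
    using assms(1) unfolding full_run_def run_def S1_def
    by (simp add: ddf_run_append off_tableau_def)
  have "entries S1 = entries T \<union> I ` {j \<in> set (rev [Suc a..<Suc k]). off_tableau T j}"
    using ddf_run_shape_entries unfolding S1_def by blast
  moreover have "I ` {j \<in> set (rev [Suc a..<Suc k]). off_tableau T j} \<subseteq> {1..k}"
    using I by (auto simp: off_tableau_def)
  ultimately show "\<forall>y\<in>entries S1. y < Suc k" using assms(2) by auto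
qed

lemma R_carry_record_rev_ins_from:
  assumes T: "is_tableau T" "entries T \<subseteq> {1..k}" "length T \<le> k" and N: "4 * k + 8 \<le> N"
    and cell: "1 \<le> r" "r \<le> length T" "T ! (r - 1) \<noteq> []"
      "r < length T \<longrightarrow> length (T ! r) < length (T ! (r - 1))"
    and rif: "rev_ins_from T r = (T', a)" and Q: "\<forall>j\<in>{1..k}. j \<notin> entries T \<longrightarrow> Q j \<le> 2 * k"
  defines "D \<equiv> \<lambda>j. if j \<in> entries T then N + 1 - row_of T j else Q j"
  shows "R_carry N (N + 1 - r) (map D (rev [1..<Suc k])) =
    (map (\<lambda>j. if off_tableau T j then Q j else T_dual N T' j) (rev [Suc a..<Suc k]) @
       1 # fst (R_carry N 1 (map D (rev [1..<a]))), snd (R_carry N 1 (map D (rev [1..<a]))))"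
proof -
  have facts: "a \<in> entries T" "entries T' = entries T - {a}"
    using rev_ins_from_props[OF T(1) cell rif] by auto
  have "rev [a..<Suc k] = rev [Suc a..<Suc k] @ [a]"
    using rev_upt_split[of a a "Suc k"] facts(1) T(2) by (force simp del: upt_Suc)
  moreover have "\<forall>j\<in>{1..k}. j \<notin> entries T \<longrightarrow> D j < N + 1 - length T"
    using Q T(3) N by (auto simp: D_def)
  then have "R_carry N (N + 1 - r) (map D (rev [1..<Suc k])) =
    (map ((\<lambda>j. if j \<in> entries T' then N + 1 - row_of T' j else D j)(a := 1)) (rev [a..<Suc k])
       @ fst (R_carry N 1 (map D (rev [1..<a]))), snd (R_carry N 1 (map D (rev [1..<a]))))"
    using T(2,3) N by (intro rev_ins_from_R_carry[OF T(1) cell rif]) (auto simp: D_def)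
  ultimately show ?thesis
    using facts by (auto simp: D_def off_tableau_def T_dual_def)
qed

lemma vxr_ddf_inv_Rem:
  assumes inv: "vxr_ddf_inv N k sh T I d c" and r: "1 \<le> r" and rem: "0 < sh r"
    and part: "is_partition (sh(r := sh r - 1))" and N: "4 * k + 8 \<le> N"
    and rif: "rev_ins_from T r = (T', a)"
  shows "vxr_ddf_inv N (Suc k) (sh(r := sh r - 1)) T' (I(a := Suc k, Suc k := a))
    (Psi_dual N (Rem r) # fst (R_carry N (Psi_plain N (Rem r)) d))
    (snd (R_carry N (Psi_plain N (Rem r)) d) # c)"
proof -
  define js xs ys where "js = rev [1..<Suc k]" and "xs = rev [Suc a..<Suc k]" and "ys = rev [1..<a]"
  define run where "run = ddf_run (T_dual N T) (off_tableau T) I"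
  define S1 where "S1 = fst (run T xs)"
  note T = vxr_ddf_invD[OF inv, folded run_def js_def]
  note cell = partition_remove_cell[OF T(4) r rem part]
  have facts: "a \<in> entries T" "is_tableau T'" "entries T' = entries T - {a}" "length T' = length T"
    "\<forall>q\<ge>1. length (row T' q) = (if q = r then length (row T r) - 1 else length (row T q))"
    "\<forall>j\<in>entries T'. j < a \<longrightarrow> row_of T' j = row_of T j" "row_ins a T' = (T, r)"
    using rev_ins_from_props[OF T(1) r cell rif] row_ins_rev_ins_from[OF T(1) r cell rif] by auto
  have a: "1 \<le> a" "a \<le> k" using facts(1) T(2) by auto
  then have js: "distinct js" "set js = {1..k}" "length js = k" "length ys < k"
    by (auto simp del: upt_Suc simp: js_def ys_def)
  obtain Q where Q: "\<forall>E. snd (ddf_run E (off_tableau T) I T js) =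
      map (\<lambda>j. if off_tableau T j then Q j else E j) js"
    and Qb: "\<forall>j\<in>set js. off_tableau T j \<longrightarrow> 1 \<le> Q j \<and> Q j \<le> length T + length js"
    using ddf_run_record_cases[OF js(1), of "off_tableau T" I T] by (elim exE conjE) (rule that)
  define D where "D j = (if j \<in> entries T then N + 1 - row_of T j else Q j)" for j
  have dD: "d = map D js" using T(6) Q unfolding run_def by (auto simp: D_def off_tableau_def T_dual_def)
  note split = full_run_split[OF facts(1) T(2,5), of N, folded run_def xs_def ys_def S1_def]
  have old: "map D ys = snd (run S1 ys)" "fst (run T js) = fst (run S1 ys)"
  proof -
    have "js = xs @ a # ys"
      using rev_upt_split[of 1 a "Suc k"] a by (simp del: upt_Suc add: js_def xs_def ys_def)
    moreover have "run T js = (fst (run S1 ys), snd (run T xs) @ T_dual N T a # snd (run S1 ys))"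
      using split(1) unfolding full_run_def js_def run_def .
    moreover have "length (map D xs) = length (snd (run T xs))"
      by (simp add: length_ddf_run_record run_def)
    ultimately show "map D ys = snd (run S1 ys)" "fst (run T js) = fst (run S1 ys)"
      using T(6) dD by auto
  qed
  have "\<forall>j\<in>set ys. off_tableau T j \<longrightarrow> I j \<le> k" "1 + length ys + k < N"
    using T(5) js(4) a N by (auto simp: off_tableau_def ys_def)
  then have carry: "fst (R_carry N 1 (snd (run S1 ys))) = snd (run (add_to_row S1 1 (Suc k)) ys)"
      "fst (run (add_to_row S1 1 (Suc k)) ys) =
        add_to_row (fst (run S1 ys)) (snd (R_carry N 1 (snd (run S1 ys)))) (Suc k)"
      "1 \<le> snd (R_carry N 1 (snd (run S1 ys)))"
    using R_carry_run_add_greater[OF T(3) split(2), of ys I 1 N] unfolding run_def by auto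
  have "\<forall>j\<in>{1..k}. j \<notin> entries T \<longrightarrow> Q j \<le> 2 * k" using Qb js T(3) by (auto simp: off_tableau_def)
  from R_carry_record_rev_ins_from[OF T(1-3) N r cell rif this, folded D_def js_def xs_def ys_def]
  have carry_d: "R_carry N (N + 1 - r) d =
      (map (\<lambda>j. if off_tableau T j then Q j else T_dual N T' j) xs @
         1 # snd (run (add_to_row S1 1 (Suc k)) ys),
       snd (R_carry N 1 (snd (run S1 ys))))"
    using old(1) carry(1) dD by simp
  have new: "full_run N (Suc k) T' (I(a := Suc k, Suc k := a)) =
    (fst (run (add_to_row S1 1 (Suc k)) ys),
     r # map (\<lambda>j. if off_tableau T j then Q j else T_dual N T' j) xs @
       1 # snd (run (add_to_row S1 1 (Suc k)) ys))"
    using full_run_rev_ins_from[OF T(1,2) facts(7,1,3,6) T(5), of Q N] Q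
    unfolding run_def S1_def xs_def ys_def js_def by blast
  have "\<forall>j. 1 \<le> j \<and> j \<le> Suc k \<and> j \<notin> entries T' \<longrightarrow>
      1 \<le> (I(a := Suc k, Suc k := a)) j \<and> (I(a := Suc k, Suc k := a)) j \<le> Suc k"
    using T(2,5) facts(1,3) by auto
  moreover have "entries T' \<subseteq> {1..Suc k}" "length T' \<le> Suc k"
    "\<forall>q\<ge>1. length (row T' q) = (sh(r := sh r - 1)) q"
    using facts(3-5) T(2-4) by auto
  ultimately show ?thesis
    unfolding vxr_ddf_inv_def
    using facts(2) T(7) new carry_d carry in_row_add_to_row_shift[OF T(8)[unfolded old(2)] carry(3)]
    by (auto simp: Psi_dual_def Psi_plain_def)
qed

lemma ddf_TI_snoc: "ddf_TI (bs @ [b]) = ddf_step (ddf_TI bs) (Suc (length bs), b)"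
proof -
  have "zip [1..<Suc (length (bs @ [b]))] (bs @ [b]) =
      zip [1..<Suc (length bs)] bs @ [(Suc (length bs), b)]"
    by (simp del: upt_Suc add: upt_Suc_append zip_append)
  then show ?thesis unfolding ddf_TI_def by simp
qed

lemma shape_snoc: "shape (bs @ [b]) = shape_step (shape bs) b"
  by (simp add: shape_def)

definition valid_step :: "(nat \<Rightarrow> nat) \<Rightarrow> letter \<Rightarrow> bool" where
  "valid_step f x \<longleftrightarrow> x \<noteq> Add 0 \<and> x \<noteq> Rem 0 \<and> removal_ok f x \<and> is_partition (shape_step f x)"

definition valid_word :: "letter list \<Rightarrow> bool" where
  "valid_word bs \<longleftrightarrow> (\<forall>k<length bs. valid_step (shape (take k bs)) (bs ! k))"

lemma valid_word_snoc: "valid_word (bs @ [b]) \<longleftrightarrow> valid_word bs \<and> valid_step (shape bs) b"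
  by (auto simp: valid_word_def nth_append less_Suc_eq)

lemma Mset_valid_word: "bs \<in> Mset dm L lam \<Longrightarrow> valid_word bs \<and> length bs = L"
proof -
  assume bs: "bs \<in> Mset dm L lam"
  have "valid_step (shape (take k bs)) (bs ! k)" if k: "k < length bs" for k
  proof -
    have "letter_ok dm (bs ! k)" using bs k by (auto simp: Mset_def)
    then have "bs ! k \<noteq> Add 0 \<and> bs ! k \<noteq> Rem 0" by (cases "bs ! k") auto
    moreover have "is_partition (shape (take (Suc k) bs))" using bs k by (auto simp: Mset_def)
    ultimately show ?thesis
      using bs k by (auto simp: Mset_def valid_step_def take_Suc_conv_app_nth shape_snoc)
  qed
  then show ?thesis using bs by (auto simp: Mset_def valid_word_def)
qed

lemma vxr_ddf_inv_word:
  "valid_word bs \<Longrightarrow> 4 * length bs + 4 \<le> N \<Longrightarrow>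
    vxr_ddf_inv N (length bs) (shape bs) (ddf_T bs) (ddf_I bs) (fst (vxr N bs)) (snd (vxr N bs))"
proof (induction bs rule: rev_induct)
  case Nil
  show ?case by (simp add: vxr_ddf_inv_def is_tableau_def row_def ddf_T_def ddf_TI_def vxr_def
        shape_def full_run_def)
next
  case (snoc b bs)
  obtain T I where TI: "ddf_TI bs = (T, I)" by fastforce
  obtain d c where dc: "vxr N bs = (d, c)" by fastforce
  have step: "valid_step (shape bs) b" using snoc.prems(1) valid_word_snoc by blast
  have IH: "vxr_ddf_inv N (length bs) (shape bs) T I d c"
    using snoc.IH snoc.prems valid_word_snoc TI dc by (simp add: ddf_T_def ddf_I_def)
  have N: "4 * length bs + 8 \<le> N" using snoc.prems(2) by simp
  have new: "ddf_TI (bs @ [b]) = ddf_step (T, I) (Suc (length bs), b)"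
    "vxr N (bs @ [b]) =
      (Psi_dual N b # fst (R_carry N (Psi_plain N b) d), snd (R_carry N (Psi_plain N b) d) # c)"
    using ddf_TI_snoc TI vxr_snoc[of N bs b] dc by (simp_all add: vxr_step_def)
  show ?case
  proof (cases b)
    case (Add r)
    then have "1 \<le> r" "is_partition ((shape bs)(r := shape bs r + 1))"
      using step by (auto simp: valid_step_def Suc_le_eq)
    moreover have "shape (bs @ [b]) = (shape bs)(r := shape bs r + 1)"
      "ddf_T (bs @ [b]) = add_to_row T r (Suc (length bs))" "ddf_I (bs @ [b]) = I"
      using new Add by (simp_all add: shape_snoc ddf_T_def ddf_I_def)
    ultimately show ?thesis
      using vxr_ddf_inv_Add[OF IH _ _ N] new(2) Add by (simp only: length_append_singleton prod.sel)
  next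
    case (Rem r)
    obtain T' a where rif: "rev_ins_from T r = (T', a)" by fastforce
    have "1 \<le> r" "0 < shape bs r" "is_partition ((shape bs)(r := shape bs r - 1))"
      using step Rem by (auto simp: valid_step_def Suc_le_eq)
    moreover have "shape (bs @ [b]) = (shape bs)(r := shape bs r - 1)"
      "ddf_T (bs @ [b]) = T'" "ddf_I (bs @ [b]) = I(a := Suc (length bs), Suc (length bs) := a)"
      using new Rem rif by (simp_all add: shape_snoc ddf_T_def ddf_I_def)
    ultimately show ?thesis
      using vxr_ddf_inv_Rem[OF IH _ _ _ N rif] new(2) Rem
      by (simp only: length_append_singleton prod.sel)
  next
    case Emp
    then have "shape (bs @ [b]) = shape bs" "ddf_T (bs @ [b]) = T"
      "ddf_I (bs @ [b]) = I(Suc (length bs) := Suc (length bs))"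
      using new by (simp_all add: shape_snoc ddf_T_def ddf_I_def)
    then show ?thesis
      using vxr_ddf_inv_Emp[OF IH N] new(2) Emp by (simp only: length_append_singleton prod.sel)
  qed
qed

section \<open>Reading off \<open>P\<close>, \<open>Q\<close> and \<open>T\<close>\<close>

lemma ddf_PQ_fold:
  fixes I :: "nat \<Rightarrow> nat" and Lp :: nat
  defines "step \<equiv> \<lambda>(P, Q) a. let (P', k) = row_ins (I a) P in (P', add_to_row Q k (Lp - a))"
  shows "fst (foldl step (S, Q0) (filter Ap js)) = fst (ddf_run E Ap I S js) \<and>
    (\<forall>v r. 1 \<le> r \<longrightarrow> v \<in> set (row (snd (foldl step (S, Q0) (filter Ap js))) r) \<longleftrightarrow>
      v \<in> set (row Q0 r) \<or>
      (\<exists>(j, q)\<in>set (zip js (snd (ddf_run E Ap I S js))). Ap j \<and> v = Lp - j \<and> r = q))"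
proof (induction js arbitrary: S Q0)
  case Nil
  then show ?case by simp
next
  case (Cons j js)
  obtain S1 q where r: "row_ins (I j) S = (S1, q)" by fastforce
  show ?case
  proof (cases "Ap j")
    case True
    have "step (S, Q0) j = (S1, add_to_row Q0 q (Lp - j))" using r by (simp add: step_def)
    then show ?thesis
      using True r Cons.IH[of S1 "add_to_row Q0 q (Lp - j)"] row_ins_shape_entries[OF r]
        in_row_add_to_row_iff[of q _ _ Q0 "Lp - j"]
      by auto
  next
    case False
    then show ?thesis using Cons.IH[of S Q0] by auto
  qed
qed

lemma rev_sorted_list_of_set_diff:
  "rev (sorted_list_of_set ({1..L} - X)) = filter (\<lambda>j. j \<notin> X) (rev [1..<Suc L])"
proof -
  have "sorted (filter (\<lambda>j. j \<notin> X) [1..<Suc L])"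
    by (rule sorted_wrt_filter[OF sorted_upt])
  then have "sorted_list_of_set ({1..L} - X) = filter (\<lambda>j. j \<notin> X) [1..<Suc L]"
    by (intro sorted_distinct_set_unique) auto
  then show ?thesis by (simp add: rev_filter)
qed

lemma in_set_zip_rev_upt:
  "length d = L \<Longrightarrow> 1 \<le> i \<Longrightarrow> i \<le> L \<Longrightarrow> (i, q) \<in> set (zip (rev [1..<Suc L]) d) \<longleftrightarrow> q = d ! (L - i)"
  by (auto simp del: upt_Suc simp: set_zip rev_nth intro!: exI[of _ "L - i"])

lemma ddf_PQ_run:
  fixes E :: "nat \<Rightarrow> nat"
  assumes "length b = L"
  defines "run \<equiv> ddf_run E (off_tableau (ddf_T b)) (ddf_I b) (ddf_T b) (rev [1..<Suc L])"
  shows "ddf_P b = fst run"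
    and "1 \<le> r \<Longrightarrow> v \<in> set (row (ddf_Q b) r) \<longleftrightarrow>
      (\<exists>(j, q)\<in>set (zip (rev [1..<Suc L]) (snd run)). off_tableau (ddf_T b) j \<and> v = L + 1 - j \<and> r = q)"
proof -
  have "rev (sorted_list_of_set (ddf_Aprime b)) = filter (off_tableau (ddf_T b)) (rev [1..<Suc L])"
    using rev_sorted_list_of_set_diff assms(1) unfolding ddf_Aprime_def off_tableau_def by metis
  then have "ddf_PQ b = foldl (\<lambda>(P, Q) a. let (P', k) = row_ins (ddf_I b a) P
        in (P', add_to_row Q k (length b + 1 - a)))
      (ddf_T b, []) (filter (off_tableau (ddf_T b)) (rev [1..<Suc L]))"
    unfolding ddf_PQ_def by (rule arg_cong)
  with ddf_PQ_fold[of "ddf_I b" "length b + 1" "ddf_T b" "[]" "off_tableau (ddf_T b)"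
      "rev [1..<Suc L]" E]
  show "ddf_P b = fst run" "1 \<le> r \<Longrightarrow> v \<in> set (row (ddf_Q b) r) \<longleftrightarrow>
      (\<exists>(j, q)\<in>set (zip (rev [1..<Suc L]) (snd run)). off_tableau (ddf_T b) j \<and> v = L + 1 - j \<and> r = q)"
    unfolding ddf_P_def ddf_Q_def run_def assms(1) by (simp_all del: upt_Suc add: row_def)
qed

context
  fixes N L :: nat and sh :: "nat \<Rightarrow> nat" and T :: tableau and I :: "nat \<Rightarrow> nat"
    and d c :: "nat list"
  assumes inv: "vxr_ddf_inv N L sh T I d c"
begin

lemma dual_letter_cases:
  obtains Q where "\<forall>i\<in>{1..L}. d ! (L - i) = (if i \<in> entries T then N + 1 - row_of T i else Q i)"
    "\<forall>i\<in>{1..L}. i \<notin> entries T \<longrightarrow> 1 \<le> Q i \<and> Q i \<le> 2 * L"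
proof -
  define js where "js = rev [1..<Suc L]"
  have "distinct js" "set js = {1..L}" "length js = L"
    by (simp_all del: upt_Suc add: js_def atLeastLessThanSuc_atLeastAtMost)
  from ddf_run_record_cases[OF this(1), of "off_tableau T" I T]
  obtain Q where Q: "\<forall>E. snd (ddf_run E (off_tableau T) I T js) =
      map (\<lambda>j. if off_tableau T j then Q j else E j) js"
    and Qb: "\<forall>j\<in>set js. off_tableau T j \<longrightarrow> 1 \<le> Q j \<and> Q j \<le> length T + length js"
    by (elim exE conjE)
  have "d ! (L - i) = (if i \<in> entries T then N + 1 - row_of T i else Q i)" if "i \<in> {1..L}" for i
    using vxr_ddf_invD(6)[OF inv] Q nth_rev_upt[of i L] that
    by (auto simp del: upt_Suc simp: off_tableau_def T_dual_def js_def)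
  moreover have "\<forall>i\<in>{1..L}. i \<notin> entries T \<longrightarrow> 1 \<le> Q i \<and> Q i \<le> 2 * L"
    using Qb vxr_ddf_invD(3)[OF inv] \<open>set js = {1..L}\<close> \<open>length js = L\<close>
    by (auto simp: off_tableau_def)
  ultimately show ?thesis using that by blast
qed

lemma in_row_iff_dual_letter:
  assumes "i \<in> {1..L}" "i \<in> entries T" "1 \<le> r" "L < N"
  shows "i \<in> set (row T r) \<longleftrightarrow> d ! (L - i) + r = N + 1"
proof -
  obtain Q where "\<forall>i\<in>{1..L}. d ! (L - i) = (if i \<in> entries T then N + 1 - row_of T i else Q i)"
    "\<forall>i\<in>{1..L}. i \<notin> entries T \<longrightarrow> 1 \<le> Q i \<and> Q i \<le> 2 * L"
    by (rule dual_letter_cases)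
  then have "d ! (L - i) = N + 1 - row_of T i" using assms(1,2) by simp
  moreover have "row_of T i \<le> L" using row_of_bounds[OF assms(2)] vxr_ddf_invD(3)[OF inv] by simp
  moreover have "i \<in> set (row T r) \<longleftrightarrow> row_of T i = r"
    using in_row_iff[OF is_tableau_distinct[OF vxr_ddf_invD(1)[OF inv]] assms(3)] assms(2) by simp
  ultimately show ?thesis using assms(4) by arith
qed

lemma dual_letter_small_iff:
  assumes "i \<in> {1..L}" "2 * L \<le> n" "n + L < N"
  shows "1 \<le> d ! (L - i) \<and> d ! (L - i) \<le> n \<longleftrightarrow> i \<notin> entries T"
proof -
  obtain Q where "\<forall>i\<in>{1..L}. d ! (L - i) = (if i \<in> entries T then N + 1 - row_of T i else Q i)"
    "\<forall>i\<in>{1..L}. i \<notin> entries T \<longrightarrow> 1 \<le> Q i \<and> Q i \<le> 2 * L"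
    by (rule dual_letter_cases)
  then show ?thesis
    using assms row_of_bounds[of i T] vxr_ddf_invD(3)[OF inv] by fastforce
qed

end

lemma ddf_P_rows:
  assumes "vxr_ddf_inv N L sh (ddf_T b) (ddf_I b) d c" "length b = L" "i \<in> {1..L}"
  shows "i \<in> set (row (ddf_P b) (c ! (L - i)))"
  using vxr_ddf_invD(8)[OF assms(1)] ddf_PQ_run(1)[OF assms(2), of "T_dual N (ddf_T b)"] assms(3)
  by auto

lemma in_row_ddf_Q_iff:
  assumes inv: "vxr_ddf_inv N L sh (ddf_T b) (ddf_I b) d c" and L: "length b = L"
    and i: "i \<in> {1..L}" "i \<notin> entries (ddf_T b)" and r: "1 \<le> r"
  shows "L + 1 - i \<in> set (row (ddf_Q b) r) \<longleftrightarrow> d ! (L - i) = r"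
proof -
  define js where "js = rev [1..<Suc L]"
  have d: "snd (ddf_run (T_dual N (ddf_T b)) (off_tableau (ddf_T b)) (ddf_I b) (ddf_T b) js) = d"
    "length d = L"
    using vxr_ddf_invD(6)[OF inv] by (simp_all add: length_ddf_run_record js_def)
  have "L + 1 - i \<in> set (row (ddf_Q b) r) \<longleftrightarrow>
      (\<exists>(j, q)\<in>set (zip js d). off_tableau (ddf_T b) j \<and> L + 1 - i = L + 1 - j \<and> r = q)"
    (is "_ \<longleftrightarrow> ?found")
    using ddf_PQ_run(2)[OF L r, of "L + 1 - i" "T_dual N (ddf_T b)"] d(1) by (simp add: js_def)
  also have "?found \<longleftrightarrow> (i, r) \<in> set (zip js d)"
  proof
    assume ?found
    then obtain j where j: "(j, r) \<in> set (zip js d)" "L + 1 - i = L + 1 - j" by blast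
    moreover have "j \<le> L" using set_zip_leftD[OF j(1)] by (simp del: upt_Suc add: js_def)
    ultimately have "j = i" using i(1) by auto
    then show "(i, r) \<in> set (zip js d)" using j(1) by simp
  next
    assume "(i, r) \<in> set (zip js d)"
    then show ?found using i(2) by (auto simp: off_tableau_def)
  qed
  also have "\<dots> \<longleftrightarrow> d ! (L - i) = r" using in_set_zip_rev_upt[OF d(2)] i(1) by (auto simp: js_def)
  finally show ?thesis .
qed

theorem proposition57:
  fixes dm :: diamond and L :: nat and lam :: "nat \<Rightarrow> nat"
  assumes "is_partition lam"
  shows "\<exists>n0. \<forall>n\<ge>n0. \<forall>b\<in>Mset dm L lam. \<forall>d c.
     (rstep (2 * n))\<^sup>*\<^sup>* (Psi_word (2 * n) b) (map Du d @ map Pl c) \<longrightarrow>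
       (let N = 2 * n; T = ddf_T b; P = ddf_P b; Q = ddf_Q b;
            A = {i \<in> {1..L}. 1 \<le> d ! (L - i) \<and> d ! (L - i) \<le> n}
        in (\<forall>i\<in>{1..L}. i \<in> set (row P (c ! (L - i)))) \<and>
           (\<forall>j\<in>{1..L} - A. \<forall>r\<ge>1. j \<in> set (row T r) \<longleftrightarrow> d ! (L - j) + r = N + 1) \<and>
           (\<forall>i\<in>A. \<forall>r\<ge>1. L + 1 - i \<in> set (row Q r) \<longleftrightarrow> d ! (L - i) = r))"
proof (intro exI[of _ "2 * L + 2"] allI impI ballI)
  fix n b d c
  assume n: "2 * L + 2 \<le> n" and b: "b \<in> Mset dm L lam"
    and rs: "(rstep (2 * n))\<^sup>*\<^sup>* (Psi_word (2 * n) b) (map Du d @ map Pl c)"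
  have b': "valid_word b" "length b = L" using Mset_valid_word[OF b] by auto
  have inv: "vxr_ddf_inv (2 * n) L (shape b) (ddf_T b) (ddf_I b) d c"
    using vxr_ddf_inv_word[OF b'(1)] rsteps_duals_plains_eq_vxr[OF rs] b'(2) n by simp
  have A: "1 \<le> d ! (L - i) \<and> d ! (L - i) \<le> n \<longleftrightarrow> i \<notin> entries (ddf_T b)" if "i \<in> {1..L}" for i
    using dual_letter_small_iff[OF inv that] n by simp
  show "let N = 2 * n; T = ddf_T b; P = ddf_P b; Q = ddf_Q b;
            A = {i \<in> {1..L}. 1 \<le> d ! (L - i) \<and> d ! (L - i) \<le> n}
        in (\<forall>i\<in>{1..L}. i \<in> set (row P (c ! (L - i)))) \<and>
           (\<forall>j\<in>{1..L} - A. \<forall>r\<ge>1. j \<in> set (row T r) \<longleftrightarrow> d ! (L - j) + r = N + 1) \<and>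
           (\<forall>i\<in>A. \<forall>r\<ge>1. L + 1 - i \<in> set (row Q r) \<longleftrightarrow> d ! (L - i) = r)"
    unfolding Let_def
    using ddf_P_rows[OF inv b'(2)] A in_row_iff_dual_letter[OF inv] in_row_ddf_Q_iff[OF inv b'(2)] n
    by (simp add: Ball_def) blast
qed

end
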